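(* The inclusion functor $\mathcal{C}(nusOp)\to\mathcal{C}(nucOp)$ (equivalently, its opposite $\mathcal{C}(nusOp)^{op}\to\mathcal{C}(nucOp)^{op}$) is an equivalence of categories.
   Context: A graph with half-edges is finite sets $V$, $H$, an involution $inv$ on $H$ and $t:H\to V$; fixed points of $inv$ are leaves, two-element orbits are edges. An operadic graph additionally has a total order on leaves (indexed $0,1,\dots$), for each vertex $v$ a total order on $t^{-1}(v)$ (indexed $0,1,\dots$), and a total order on $V$ (indexed $1,\dots,n$); considered up to isomorphism preserving all data. A cyclic operadic tree is an operadic graph whose underlying graph is a tree and which has at least one leaf. A rooted operadic tree is a cyclic operadic tree such that at every vertex the $0$-th half-edge lies on the path to the $0$-th leaf. The category $\mathcal{C}(nucOp)^{op}$ has as objects cyclic operadic trees with at least one vertex. If $p$ has vertices $v_1<\dots<v_n$, a morphism $p\to q$ consists of cyclic operadic trees $q_1,\dots,q_n$ with at least one vertex, $q_l$ having as many leaves as $v_l$ has half-edges, and a bijection $\bigsqcup_l V(q_l)\to V(q)$ order preserving on each $V(q_l)$, such that $q$ is obtained by substituting $q_l$ into $v_l$: the $i$-th leaf of $q_l$ is identified with the $i$-th half-edge of $v_l$; edges of $p$ between the $i$-th half-edge of $v_j$ and the $k$-th half-edge of $v_l$ become edges of $q$ between the $i$-th leaf of $q_j$ and the $k$-th leaf of $q_l$; if the $i$-th half-edge of $v_j$ is the $k$-th leaf of $p$ then the $i$-th leaf of $q_j$ is the $k$-th leaf of $q$; half-edge orders come from the $q_l$ and the vertex order of $q$ is transported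 along the bijection. Composition is iterated substitution. $\mathcal{C}(nucOp)$ is the opposite category. $\mathcal{C}(nusOp)$ is the subcategory of $\mathcal{C}(nucOp)$ whose objects are rooted operadic trees with at least one vertex and whose morphisms are those in which all inserted trees $q_l$ are rooted. *)

theory Defs
  imports Main
begin

text \<open>Since an operadic graph carries total orders on its vertices, on the half-edges
at each vertex, and on its leaves, an isomorphism class has a unique canonical
representative: vertices are 0,...,n-1 (vertex v here is the (v+1)-th vertex of the
paper), the half-edges at v are (v,0),...,(v,d-1), and each half-edge records its
other end: either the leaf label k (it is the k-th leaf), or the half-edge (w,j) it is
glued to. Hence equality of representations is isomorphism of operadic graphs.\<close>

datatype hend = Lf nat | Ed nat nat

type_synonym og = "hend list list"

definition half_edges :: "og \<Rightarrow> (nat \<times> nat) set" where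
  "half_edges G = {(v, i). v < length G \<and> i < length (G ! v)}"

definition hend_at :: "og \<Rightarrow> nat \<times> nat \<Rightarrow> hend" where
  "hend_at G h = G ! fst h ! snd h"

definition leaf_halfedges :: "og \<Rightarrow> (nat \<times> nat) set" where
  "leaf_halfedges G = {h \<in> half_edges G. \<exists>k. hend_at G h = Lf k}"

definition edge_halfedges :: "og \<Rightarrow> (nat \<times> nat) set" where
  "edge_halfedges G = {h \<in> half_edges G. \<exists>w j. hend_at G h = Ed w j}"

definition num_leaves :: "og \<Rightarrow> nat" where
  "num_leaves G = card (leaf_halfedges G)"

definition num_edges :: "og \<Rightarrow> nat" where
  "num_edges G = card (edge_halfedges G) div 2"

definition wf_og :: "og \<Rightarrow> bool" where
  "wf_og G \<longleftrightarrow>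
     (\<forall>h \<in> half_edges G. \<forall>w j. hend_at G h = Ed w j \<longrightarrow>
         (w, j) \<in> half_edges G \<and> (w, j) \<noteq> h \<and> hend_at G (w, j) = Ed (fst h) (snd h))
   \<and> (\<forall>h \<in> half_edges G. \<forall>h' \<in> half_edges G. \<forall>k.
         hend_at G h = Lf k \<and> hend_at G h' = Lf k \<longrightarrow> h = h')
   \<and> {k. \<exists>h \<in> half_edges G. hend_at G h = Lf k} = {..<num_leaves G}"

definition adj :: "og \<Rightarrow> nat \<Rightarrow> nat \<Rightarrow> bool" where
  "adj G v w \<longleftrightarrow> (\<exists>i j. (v, i) \<in> half_edges G \<and> hend_at G (v, i) = Ed w j)"

definition og_connected :: "og \<Rightarrow> bool" where
  "og_connected G \<longleftrightarrow>
     (\<forall>v < length G. \<forall>w < length G. (v, w) \<in> {(a, b). adj G a b}\<^sup>*)"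

text \<open>Underlying graph is a tree: connected with (number of edges) = (number of
vertices) - 1 (for nonempty vertex set this is the usual tree condition, loops and
multiple edges counting as cycles).\<close>
definition is_tree :: "og \<Rightarrow> bool" where
  "is_tree G \<longleftrightarrow> wf_og G \<and> og_connected G \<and> num_edges G + 1 = length G"

definition cyc_tree :: "og \<Rightarrow> bool" where
  "cyc_tree G \<longleftrightarrow> is_tree G \<and> num_leaves G \<ge> 1"

definition leaf_at :: "og \<Rightarrow> nat \<Rightarrow> nat \<times> nat" where
  "leaf_at G k = (THE h. h \<in> half_edges G \<and> hend_at G h = Lf k)"

text \<open>Rooted: at every vertex v, the 0-th half-edge lies on the path from v to the
0-th leaf, i.e. either it is the 0-th leaf itself, or it is glued to a half-edge at a
vertex w from which the vertex carrying the 0-th leaf is reachable without passing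
through v.\<close>
definition rooted :: "og \<Rightarrow> bool" where
  "rooted G \<longleftrightarrow> cyc_tree G \<and>
     (\<forall>v < length G. G ! v \<noteq> [] \<and>
        (G ! v ! 0 = Lf 0 \<or>
         (\<exists>w j. G ! v ! 0 = Ed w j \<and>
             (w, fst (leaf_at G 0)) \<in> {(a, b). a \<noteq> v \<and> b \<noteq> v \<and> adj G a b}\<^sup>*)))"

text \<open>A vertex assignment sigma (list over the vertices of q) sends each vertex of q to
the vertex l of p into which it was substituted; the bijection of the paper is
order preserving on each V(q_l), so vertex x of q is the (rank sigma x)-th vertex of
q_(sigma!x), and the r-th vertex of q_l is vertex (pos sigma l r) of q.\<close>

definition rank :: "nat list \<Rightarrow> nat \<Rightarrow> nat" where
  "rank \<sigma> x = length (filter (\<lambda>y. \<sigma> ! y = \<sigma> ! x) [0..<x])"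

definition pos :: "nat list \<Rightarrow> nat \<Rightarrow> nat \<Rightarrow> nat" where
  "pos \<sigma> l r = filter (\<lambda>y. \<sigma> ! y = l) [0..<length \<sigma>] ! r"

definition tr_hend :: "og \<Rightarrow> og list \<Rightarrow> nat list \<Rightarrow> nat \<Rightarrow> hend \<Rightarrow> hend" where
  "tr_hend p qs \<sigma> l e =
     (case e of
        Ed w j \<Rightarrow> Ed (pos \<sigma> l w) j
      | Lf i \<Rightarrow>
          (case p ! l ! i of
             Lf k \<Rightarrow> Lf k
           | Ed l' i' \<Rightarrow> Ed (pos \<sigma> l' (fst (leaf_at (qs ! l') i'))) (snd (leaf_at (qs ! l') i'))))"

definition subst :: "og \<Rightarrow> og list \<Rightarrow> nat list \<Rightarrow> og" where
  "subst p qs \<sigma> =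
     map (\<lambda>x. map (tr_hend p qs \<sigma> (\<sigma> ! x)) (qs ! (\<sigma> ! x) ! rank \<sigma> x)) [0..<length \<sigma>]"

text \<open>A morphism is a tuple (source, inserted trees, vertex assignment, target).\<close>
type_synonym opmor = "og \<times> og list \<times> nat list \<times> og"

definition valid_subst :: "og \<Rightarrow> og list \<Rightarrow> nat list \<Rightarrow> og \<Rightarrow> bool" where
  "valid_subst p qs \<sigma> q \<longleftrightarrow>
     length qs = length p
   \<and> (\<forall>l < length p. cyc_tree (qs ! l) \<and> qs ! l \<noteq> [] \<and> num_leaves (qs ! l) = length (p ! l))
   \<and> set \<sigma> \<subseteq> {..<length p}
   \<and> (\<forall>l < length p. length (filter (\<lambda>y. y = l) \<sigma>) = length (qs ! l))
   \<and> subst p qs \<sigma> = q"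

definition corolla :: "nat \<Rightarrow> og" where
  "corolla d = [map Lf [0..<d]]"

definition op_ident :: "og \<Rightarrow> opmor" where
  "op_ident p = (p, map (\<lambda>row. corolla (length row)) p, [0..<length p], p)"

text \<open>Composition g o f of f : p -> q and g : q -> s (iterated substitution).\<close>
fun op_comp :: "opmor \<Rightarrow> opmor \<Rightarrow> opmor" where
  "op_comp (q', rs, \<tau>, s) (p, qs, \<sigma>, q) =
     (p,
      map (\<lambda>l. subst (qs ! l)
                 (map (\<lambda>r. rs ! pos \<sigma> l r) [0..<length (qs ! l)])
                 (map (rank \<sigma>) (filter (\<lambda>y. \<sigma> ! y = l) \<tau>)))
          [0..<length p],
      map (\<lambda>y. \<sigma> ! y) \<tau>,
      s)"

record ('o, 'm) cat =
  Ob :: "'o set"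
  Hom :: "'o \<Rightarrow> 'o \<Rightarrow> 'm set"
  comp :: "'m \<Rightarrow> 'm \<Rightarrow> 'm"
  ident :: "'o \<Rightarrow> 'm"

definition nucOp_op :: "(og, opmor) cat" where
  "nucOp_op = \<lparr> Ob = {p. cyc_tree p \<and> p \<noteq> []},
     Hom = (\<lambda>p q. {(p', qs, \<sigma>, q'). p' = p \<and> q' = q \<and> valid_subst p qs \<sigma> q}),
     comp = op_comp, ident = op_ident \<rparr>"

definition nusOp_op :: "(og, opmor) cat" where
  "nusOp_op = \<lparr> Ob = {p. rooted p \<and> p \<noteq> []},
     Hom = (\<lambda>p q. {(p', qs, \<sigma>, q'). p' = p \<and> q' = q \<and> valid_subst p qs \<sigma> q
                      \<and> (\<forall>l < length p. rooted (qs ! l))}),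
     comp = op_comp, ident = op_ident \<rparr>"

definition is_functor ::
  "('a, 'f) cat \<Rightarrow> ('b, 'g) cat \<Rightarrow> ('a \<Rightarrow> 'b) \<Rightarrow> ('f \<Rightarrow> 'g) \<Rightarrow> bool" where
  "is_functor C D Fo Fm \<longleftrightarrow>
     (\<forall>a \<in> Ob C. Fo a \<in> Ob D)
   \<and> (\<forall>a \<in> Ob C. \<forall>b \<in> Ob C. \<forall>f \<in> Hom C a b. Fm f \<in> Hom D (Fo a) (Fo b))
   \<and> (\<forall>a \<in> Ob C. Fm (ident C a) = ident D (Fo a))
   \<and> (\<forall>a \<in> Ob C. \<forall>b \<in> Ob C. \<forall>c \<in> Ob C. \<forall>f \<in> Hom C a b. \<forall>g \<in> Hom C b c.
        Fm (comp C g f) = comp D (Fm g) (Fm f))"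

definition is_iso :: "('a, 'f) cat \<Rightarrow> 'a \<Rightarrow> 'a \<Rightarrow> 'f \<Rightarrow> bool" where
  "is_iso C a b f \<longleftrightarrow> f \<in> Hom C a b \<and>
     (\<exists>g \<in> Hom C b a. comp C g f = ident C a \<and> comp C f g = ident C b)"

definition nat_iso ::
  "('a, 'f) cat \<Rightarrow> ('b, 'g) cat \<Rightarrow> ('a \<Rightarrow> 'b) \<Rightarrow> ('f \<Rightarrow> 'g) \<Rightarrow> ('a \<Rightarrow> 'b) \<Rightarrow> ('f \<Rightarrow> 'g)
     \<Rightarrow> ('a \<Rightarrow> 'g) \<Rightarrow> bool" where
  "nat_iso C D Fo Fm Go Gm \<eta> \<longleftrightarrow>
     (\<forall>a \<in> Ob C. is_iso D (Fo a) (Go a) (\<eta> a))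
   \<and> (\<forall>a \<in> Ob C. \<forall>b \<in> Ob C. \<forall>f \<in> Hom C a b. comp D (\<eta> b) (Fm f) = comp D (Gm f) (\<eta> a))"

definition cat_equivalence ::
  "('a, 'f) cat \<Rightarrow> ('b, 'g) cat \<Rightarrow> ('a \<Rightarrow> 'b) \<Rightarrow> ('f \<Rightarrow> 'g) \<Rightarrow> bool" where
  "cat_equivalence C D Fo Fm \<longleftrightarrow> is_functor C D Fo Fm \<and>
     (\<exists>Go Gm \<eta> \<epsilon>. is_functor D C Go Gm
        \<and> nat_iso C C id id (Go \<circ> Fo) (Gm \<circ> Fm) \<eta>
        \<and> nat_iso D D (Fo \<circ> Go) (Fm \<circ> Gm) id id \<epsilon>)"

end

theory Submission
  imports Defs
begin

text \<open>A cyclic operadic tree p becomes rooted if at every vertex the half-edge on the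
  path to the 0-th leaf is rotated to the front; call the result reroot p. Substituting
  into reroot p the corollas whose leaves are permuted by the inverse rotations gives back
  p, so reroot p and p are isomorphic in C(nucOp)^op. On a morphism given by inserted
  trees q_l, rerooting relabels the leaves of q_l by the rotation at vertex l and then
  reroots q_l. This is compatible with composition because of one observation: in a
  substitution q of trees q_l into p, the root-ward half-edge of a vertex x of q is the
  half-edge of x, as a vertex of q_l, that points toward the leaf of q_l matching the
  root-ward half-edge of l in p. Rerooting therefore is a functor into C(nusOp)^op; it
  fixes rooted trees and the morphisms between them, so it is quasi-inverse to the
  inclusion, with the identity as unit and the rotations as counit.\<close>

lemma half_edges_iff [simp]: "(v, i) \<in> half_edges G \<longleftrightarrow> v < length G \<and> i < length (G ! v)"
  by (simp add: half_edges_def)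

lemma hend_at_Pair [simp]: "hend_at G (v, i) = G ! v ! i"
  by (simp add: hend_at_def)

lemma finite_half_edges [simp]: "finite (half_edges G)"
proof -
  have "half_edges G = Sigma {..<length G} (\<lambda>v. {..<length (G ! v)})"
    by (auto simp: half_edges_def)
  then show ?thesis by simp
qed

lemma wf_ogI:
  assumes partner: "\<And>v i w j. v < length G \<Longrightarrow> i < length (G ! v) \<Longrightarrow> G ! v ! i = Ed w j \<Longrightarrow>
      w < length G \<and> j < length (G ! w) \<and> (w, j) \<noteq> (v, i) \<and> G ! w ! j = Ed v i"
    and leaf_unique: "\<And>v i v' i' k. v < length G \<Longrightarrow> i < length (G ! v) \<Longrightarrow> G ! v ! i = Lf k \<Longrightarrow>
      v' < length G \<Longrightarrow> i' < length (G ! v') \<Longrightarrow> G ! v' ! i' = Lf k \<Longrightarrow> (v', i') = (v, i)"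
    and labels: "{k. \<exists>h \<in> half_edges G. hend_at G h = Lf k} = {..<num_leaves G}"
  shows "wf_og G"
proof -
  have "\<forall>h \<in> half_edges G. \<forall>w j. hend_at G h = Ed w j \<longrightarrow>
      (w, j) \<in> half_edges G \<and> (w, j) \<noteq> h \<and> hend_at G (w, j) = Ed (fst h) (snd h)"
  proof (intro ballI allI impI)
    fix h w j assume "h \<in> half_edges G" "hend_at G h = Ed w j"
    then show "(w, j) \<in> half_edges G \<and> (w, j) \<noteq> h \<and> hend_at G (w, j) = Ed (fst h) (snd h)"
      using partner[of "fst h" "snd h" w j] by (cases h) simp
  qed
  moreover have "\<forall>h \<in> half_edges G. \<forall>h' \<in> half_edges G. \<forall>k.
      hend_at G h = Lf k \<and> hend_at G h' = Lf k \<longrightarrow> h = h'"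
  proof (intro ballI allI impI)
    fix h h' k assume "h \<in> half_edges G" "h' \<in> half_edges G" "hend_at G h = Lf k \<and> hend_at G h' = Lf k"
    then show "h = h'" using leaf_unique[of "fst h" "snd h" k "fst h'" "snd h'"] by (cases h, cases h') simp
  qed
  ultimately show ?thesis using labels unfolding wf_og_def by blast
qed

lemma wf_og_partner:
  assumes "wf_og G" "v < length G" "i < length (G ! v)" "G ! v ! i = Ed w j"
  shows "w < length G \<and> j < length (G ! w) \<and> (w, j) \<noteq> (v, i) \<and> G ! w ! j = Ed v i"
proof -
  have "(v, i) \<in> half_edges G" using assms(2,3) by simp
  with assms(1) have "\<forall>w j. hend_at G (v, i) = Ed w j \<longrightarrow>
      (w, j) \<in> half_edges G \<and> (w, j) \<noteq> (v, i) \<and> hend_at G (w, j) = Ed (fst (v, i)) (snd (v, i))"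
    unfolding wf_og_def by blast
  then show ?thesis using assms(4) by simp
qed

lemma wf_og_leaf_unique:
  assumes "wf_og G" "v < length G" "i < length (G ! v)" "G ! v ! i = Lf k"
    "v' < length G" "i' < length (G ! v')" "G ! v' ! i' = Lf k"
  shows "v' = v \<and> i' = i"
proof -
  have "(v, i) \<in> half_edges G" "(v', i') \<in> half_edges G"
    "hend_at G (v, i) = Lf k" "hend_at G (v', i') = Lf k" using assms(2-7) by simp_all
  with assms(1) have "(v, i) = (v', i')" unfolding wf_og_def by blast
  then show ?thesis by simp
qed

lemma wf_og_leaf_labels:
  "wf_og G \<Longrightarrow> {k. \<exists>h \<in> half_edges G. hend_at G h = Lf k} = {..<num_leaves G}"
  unfolding wf_og_def by blast

lemma wf_og_leaf_label_lt:
  assumes "wf_og G" "v < length G" "i < length (G ! v)" "G ! v ! i = Lf k"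
  shows "k < num_leaves G"
proof -
  have "k \<in> {k. \<exists>h \<in> half_edges G. hend_at G h = Lf k}"
    using assms(2-4) by (intro CollectI bexI[of _ "(v, i)"]) simp_all
  then show ?thesis using wf_og_leaf_labels[OF assms(1)] by simp
qed

lemma wf_og_leaf_exists:
  assumes "wf_og G" "k < num_leaves G"
  shows "\<exists>v i. v < length G \<and> i < length (G ! v) \<and> G ! v ! i = Lf k"
proof -
  have "k \<in> {k. \<exists>h \<in> half_edges G. hend_at G h = Lf k}"
    using wf_og_leaf_labels[OF assms(1)] assms(2) by simp
  then show ?thesis by (auto simp: half_edges_def hend_at_def)
qed

lemma leaf_at_eqI:
  assumes "wf_og G" "v < length G" "i < length (G ! v)" "G ! v ! i = Lf k"
  shows "leaf_at G k = (v, i)"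
  unfolding leaf_at_def
proof (rule the_equality)
  fix h assume "h \<in> half_edges G \<and> hend_at G h = Lf k"
  then show "h = (v, i)" using wf_og_leaf_unique[OF assms] by (cases h) auto
qed (use assms in simp)

lemma leaf_at_spec:
  assumes "wf_og G" "k < num_leaves G"
  shows "fst (leaf_at G k) < length G \<and> snd (leaf_at G k) < length (G ! fst (leaf_at G k))
      \<and> G ! fst (leaf_at G k) ! snd (leaf_at G k) = Lf k"
  using wf_og_leaf_exists[OF assms] leaf_at_eqI[OF assms(1)] by force

lemma adj_iff: "adj G a b \<longleftrightarrow> (\<exists>i j. a < length G \<and> i < length (G ! a) \<and> G ! a ! i = Ed b j)"
  by (auto simp: adj_def)

lemma adj_sym: "wf_og G \<Longrightarrow> adj G a b \<Longrightarrow> adj G b a"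
  unfolding adj_iff by (blast dest: wf_og_partner)

lemma adj_lt_length: "wf_og G \<Longrightarrow> adj G a b \<Longrightarrow> a < length G \<and> b < length G"
  unfolding adj_iff by (blast dest: wf_og_partner)

definition adj_avoid :: "og \<Rightarrow> nat \<Rightarrow> (nat \<times> nat) set" where
  "adj_avoid G v = {(a, b). a \<noteq> v \<and> b \<noteq> v \<and> adj G a b}"

lemma sym_adj_avoid: "wf_og G \<Longrightarrow> sym (adj_avoid G v)"
  unfolding sym_def adj_avoid_def using adj_sym by blast

lemma adj_avoid_rtrancl_sym: "wf_og G \<Longrightarrow> (a, b) \<in> (adj_avoid G v)\<^sup>* \<Longrightarrow> (b, a) \<in> (adj_avoid G v)\<^sup>*"
  by (meson sym_adj_avoid sym_rtrancl symD)

lemma adj_avoid_rtrancl_from: "(v, b) \<in> (adj_avoid G v)\<^sup>* \<Longrightarrow> b = v"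
  by (erule converse_rtranclE) (auto simp: adj_avoid_def)

lemma adj_avoid_rtrancl_ne: "(a, b) \<in> (adj_avoid G v)\<^sup>* \<Longrightarrow> a \<noteq> v \<Longrightarrow> b \<noteq> v"
  by (erule rtranclE) (auto simp: adj_avoid_def)

lemma adj_avoid_rtrancl_ne': "(a, b) \<in> (adj_avoid G v)\<^sup>* \<Longrightarrow> b \<noteq> v \<Longrightarrow> a \<noteq> v"
  by (erule converse_rtranclE) (auto simp: adj_avoid_def)

lemma adj_avoid_rtrancl_lt:
  assumes "wf_og G" "(a, b) \<in> (adj_avoid G v)\<^sup>*" "a < length G"
  shows "b < length G"
  using assms(2,3)
proof (induction rule: rtrancl_induct)
  case (step b c)
  then show ?case using adj_lt_length[OF assms(1)] unfolding adj_avoid_def by blast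
qed

lemma rooted_iff: "rooted G \<longleftrightarrow> cyc_tree G \<and>
     (\<forall>v < length G. G ! v \<noteq> [] \<and>
        (G ! v ! 0 = Lf 0 \<or>
         (\<exists>w j. G ! v ! 0 = Ed w j \<and> (w, fst (leaf_at G 0)) \<in> (adj_avoid G v)\<^sup>*)))"
  unfolding rooted_def adj_avoid_def by simp

lemma cyc_treeD: "cyc_tree G \<Longrightarrow> is_tree G" "cyc_tree G \<Longrightarrow> wf_og G" "cyc_tree G \<Longrightarrow> 0 < num_leaves G"
  unfolding cyc_tree_def is_tree_def by auto

lemma rooted_imp_cyc_tree: "rooted G \<Longrightarrow> cyc_tree G"
  unfolding rooted_def by blast

section \<open>Trees\<close>

definition adj_via :: "og \<Rightarrow> (nat \<times> nat) set \<Rightarrow> (nat \<times> nat) set" where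
  "adj_via G S = {(a, b). \<exists>i j. (a, i) \<in> S \<and> G ! a ! i = Ed b j}"

text \<open>The descending ports of the vertices v \<noteq> 0 and their partners are 2 (n - 1)
  distinct elements of S.\<close>

lemma card_ge_if_descending_ports:
  fixes d :: "nat \<Rightarrow> nat"
  assumes wf: "wf_og G" and S: "S \<subseteq> half_edges G"
    and closed: "\<And>a i w j. (a, i) \<in> S \<Longrightarrow> G ! a ! i = Ed w j \<Longrightarrow> (w, j) \<in> S"
    and descend: "\<And>v. v \<in> {1..<length G} \<Longrightarrow> \<exists>i w j. (v, i) \<in> S \<and> G ! v ! i = Ed w j \<and> d w < d v"
  shows "2 * (length G - 1) \<le> card S"
proof -
  let ?V = "{1..<length G}"
  obtain i w j where port: "\<And>v. v \<in> ?V \<Longrightarrow> (v, i v) \<in> S \<and> G ! v ! i v = Ed (w v) (j v) \<and> d (w v) < d v"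
    using descend by metis
  have partner: "G ! w v ! j v = Ed v (i v)" if "v \<in> ?V" for v
  proof -
    have "v < length G" "i v < length (G ! v)" using port[OF that] S by auto
    then show ?thesis using wf_og_partner[OF wf] port[OF that] by blast
  qed
  define outward where "outward v = (v, i v)" for v
  define inward where "inward v = (w v, j v)" for v
  have "inj_on outward ?V" unfolding outward_def by (rule inj_onI) simp
  moreover have "inj_on inward ?V"
  proof (rule inj_onI)
    fix v v' assume v: "v \<in> ?V" "v' \<in> ?V" and "inward v = inward v'"
    then have "G ! w v ! j v = G ! w v' ! j v'" unfolding inward_def by simp
    then show "v = v'" using partner[OF v(1)] partner[OF v(2)] by simp
  qed
  moreover have "outward ` ?V \<inter> inward ` ?V = {}"
  proof (rule ccontr)
    assume "outward ` ?V \<inter> inward ` ?V \<noteq> {}"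
    then obtain v v' where v: "v \<in> ?V" "v' \<in> ?V" and eq: "(v, i v) = (w v', j v')"
      unfolding outward_def inward_def by blast
    then have "v = w v'" "i v = j v'" by (metis prod.inject)+
    then have "G ! v ! i v = Ed v' (i v')" using partner[OF v(2)] by metis
    then have "w v = v'" using port[OF v(1)] by simp
    then show False using port[OF v(1)] port[OF v(2)] eq by simp
  qed
  moreover have "outward ` ?V \<union> inward ` ?V \<subseteq> S"
  proof (intro Un_least image_subsetI)
    fix v assume "v \<in> ?V"
    then show "outward v \<in> S" "inward v \<in> S"
      using port closed unfolding outward_def inward_def by blast+
  qed
  moreover have "finite S" using S by (rule finite_subset) simp
  ultimately have "card (outward ` ?V) + card (inward ` ?V) \<le> card S"
    by (metis card_Un_disjoint card_mono finite_Un finite_subset)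
  then have "card ?V + card ?V \<le> card S"
    using card_image \<open>inj_on outward ?V\<close> \<open>inj_on inward ?V\<close> by metis
  then show ?thesis by simp
qed

lemma descending_port_if_connected:
  assumes conn: "(v, 0) \<in> (adj_via G S)\<^sup>*" and v: "v \<noteq> 0"
  defines "d u \<equiv> LEAST k. (u, 0) \<in> adj_via G S ^^ k"
  shows "\<exists>i w j. (v, i) \<in> S \<and> G ! v ! i = Ed w j \<and> d w < d v"
proof -
  have v_d: "(v, 0) \<in> adj_via G S ^^ d v"
    using conn unfolding d_def rtrancl_power by (rule LeastI_ex)
  have "d v \<noteq> 0"
  proof
    assume "d v = 0"
    then show False using v_d v by simp
  qed
  then obtain k where k: "d v = Suc k" using not0_implies_Suc by blast
  then obtain u where u: "(v, u) \<in> adj_via G S" "(u, 0) \<in> adj_via G S ^^ k"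
    using v_d relpow_Suc_D2 by metis
  have "d u \<le> k" unfolding d_def using u(2) by (rule Least_le)
  then show ?thesis using u(1) k unfolding adj_via_def by auto
qed

lemma connecting_halfedges_card_ge:
  assumes "wf_og G" "S \<subseteq> half_edges G"
    and "\<And>a i w j. (a, i) \<in> S \<Longrightarrow> G ! a ! i = Ed w j \<Longrightarrow> (w, j) \<in> S"
    and "\<And>v. v < length G \<Longrightarrow> (v, 0) \<in> (adj_via G S)\<^sup>*"
  shows "2 * (length G - 1) \<le> card S"
  using card_ge_if_descending_ports[OF assms(1-3) descending_port_if_connected] assms(4) by simp

lemma sym_adj_via:
  assumes wf: "wf_og G" and S: "S \<subseteq> half_edges G"
    and closed: "\<And>a i w j. (a, i) \<in> S \<Longrightarrow> G ! a ! i = Ed w j \<Longrightarrow> (w, j) \<in> S"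
  shows "sym (adj_via G S)"
proof (rule symI)
  fix a b assume "(a, b) \<in> adj_via G S"
  then obtain i j where ai: "(a, i) \<in> S" "G ! a ! i = Ed b j" unfolding adj_via_def by blast
  moreover from this have "a < length G" "i < length (G ! a)" using S by auto
  ultimately have "(b, j) \<in> S" "G ! b ! j = Ed a i" using closed wf_og_partner[OF wf] by blast+
  then show "(b, a) \<in> adj_via G S" unfolding adj_via_def by blast
qed

lemma edge_halfedges_iff:
  "(a, c) \<in> edge_halfedges G \<longleftrightarrow> a < length G \<and> c < length (G ! a) \<and> (\<exists>w j. G ! a ! c = Ed w j)"
  by (simp add: edge_halfedges_def)

lemma remove_edge_closed:
  assumes wf: "wf_og G" and e: "v < length G" "i < length (G ! v)" "G ! v ! i = Ed w j"
    and ac: "(a, c) \<in> edge_halfedges G - {(v, i), (w, j)}" and ab: "G ! a ! c = Ed b d"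
  shows "(b, d) \<in> edge_halfedges G - {(v, i), (w, j)}"
proof -
  have "a < length G" "c < length (G ! a)" using ac by (simp_all add: edge_halfedges_iff)
  then have b: "b < length G" "d < length (G ! b)" "G ! b ! d = Ed a c"
    using wf_og_partner[OF wf _ _ ab] by blast+
  have "G ! w ! j = Ed v i" using wf_og_partner[OF wf e] by blast
  then have "(b, d) \<noteq> (v, i)" "(b, d) \<noteq> (w, j)" using ac b(3) e(3) by auto
  then show ?thesis using b by (simp add: edge_halfedges_iff)
qed

lemma adj_avoid_subset_remove_edge:
  assumes wf: "wf_og G" and e: "v < length G" "i < length (G ! v)" "G ! v ! i = Ed w j"
  shows "adj_avoid G v \<subseteq> adj_via G (edge_halfedges G - {(v, i), (w, j)})"
proof
  fix x assume "x \<in> adj_avoid G v"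
  then obtain a b c d where x: "x = (a, b)" "a \<noteq> v" "b \<noteq> v"
    and ac: "a < length G" "c < length (G ! a)" "G ! a ! c = Ed b d"
    unfolding adj_avoid_def adj_iff by blast
  have "G ! w ! j = Ed v i" using wf_og_partner[OF wf e] by blast
  then have "(a, c) \<noteq> (w, j)" using ac(3) x(3) by auto
  then have "(a, c) \<in> edge_halfedges G - {(v, i), (w, j)}"
    using ac x(2) by (simp add: edge_halfedges_iff)
  then show "x \<in> adj_via G (edge_halfedges G - {(v, i), (w, j)})"
    using ac(3) x(1) unfolding adj_via_def by blast
qed

lemma card_remove_edge:
  assumes wf: "wf_og G" and e: "v < length G" "i < length (G ! v)" "G ! v ! i = Ed w j"
  shows "card (edge_halfedges G - {(v, i), (w, j)}) + 2 = card (edge_halfedges G)"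
proof -
  have w: "w < length G" "j < length (G ! w)" "(w, j) \<noteq> (v, i)" "G ! w ! j = Ed v i"
    using wf_og_partner[OF wf e] by blast+
  have "(v, i) \<in> edge_halfedges G" "(w, j) \<in> edge_halfedges G"
    using e w(1,2,4) unfolding edge_halfedges_iff by blast+
  then have "{(v, i), (w, j)} \<subseteq> edge_halfedges G" by blast
  moreover have "finite (edge_halfedges G)"
    by (rule finite_subset[of _ "half_edges G"]) (auto simp: edge_halfedges_def)
  moreover have "card {(v, i), (w, j)} = 2" using w(3) by auto
  ultimately have "card (edge_halfedges G - {(v, i), (w, j)}) = card (edge_halfedges G) - 2"
      "2 \<le> card (edge_halfedges G)"
    by (metis card_Diff_subset finite.emptyI finite.insertI, metis card_mono)
  then show ?thesis by linarith
qed

lemma remove_edge_detour: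
  assumes wf: "wf_og G" and v: "v < length G" "i < length (G ! v)" "i' < length (G ! v)" "i \<noteq> i'"
    and e: "G ! v ! i = Ed w j" "G ! v ! i' = Ed w' j'" and path: "(w, w') \<in> (adj_avoid G v)\<^sup>*"
  shows "(v, w) \<in> (adj_via G (edge_halfedges G - {(v, i), (w, j)}))\<^sup>*"
proof (cases "w = v")
  case False
  let ?S = "edge_halfedges G - {(v, i), (w, j)}"
  have "G ! w ! j = Ed v i" using wf_og_partner[OF wf v(1,2) e(1)] by blast
  then have "(v, i') \<in> ?S" using v e(2) False by (auto simp: edge_halfedges_iff)
  then have "(v, w') \<in> adj_via G ?S" using e(2) unfolding adj_via_def by blast
  moreover have "(w', w) \<in> (adj_via G ?S)\<^sup>*"
    using rtrancl_mono[OF adj_avoid_subset_remove_edge[OF wf v(1,2) e(1)]] adj_avoid_rtrancl_sym[OF wf path]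
    by blast
  ultimately show ?thesis by (rule converse_rtrancl_into_rtrancl)
qed simp

lemma adj_subset_remove_edge:
  assumes wf: "wf_og G" and v: "v < length G" "i < length (G ! v)" "i' < length (G ! v)" "i \<noteq> i'"
    and e: "G ! v ! i = Ed w j" "G ! v ! i' = Ed w' j'" and path: "(w, w') \<in> (adj_avoid G v)\<^sup>*"
  shows "{(a, b). adj G a b} \<subseteq> (adj_via G (edge_halfedges G - {(v, i), (w, j)}))\<^sup>*"
proof (safe)
  define S where "S = edge_halfedges G - {(v, i), (w, j)}"
  have S_sub: "S \<subseteq> half_edges G" unfolding S_def edge_halfedges_def by blast
  have closed: "\<And>a c b d. (a, c) \<in> S \<Longrightarrow> G ! a ! c = Ed b d \<Longrightarrow> (b, d) \<in> S"
    unfolding S_def using remove_edge_closed[OF wf v(1,2) e(1)] by blast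
  have sym: "sym ((adj_via G S)\<^sup>*)"
    by (rule sym_rtrancl, rule sym_adj_via[OF wf S_sub]) (use closed in blast)
  have vw: "(v, w) \<in> (adj_via G S)\<^sup>*" unfolding S_def by (rule remove_edge_detour[OF wf v e path])
  fix a b assume "adj G a b"
  then obtain c d where ac: "a < length G" "c < length (G ! a)" "G ! a ! c = Ed b d"
    unfolding adj_iff by blast
  consider "(a, c) = (v, i)" | "(a, c) = (w, j)" | "(a, c) \<in> S"
    using ac by (auto simp: S_def edge_halfedges_iff)
  then have "(a, b) \<in> (adj_via G S)\<^sup>*"
  proof cases
    case 1
    then show ?thesis using vw ac(3) e(1) by simp
  next
    case 2
    then have "(b, a) \<in> (adj_via G S)\<^sup>*" using vw ac(3) wf_og_partner[OF wf v(1,2) e(1)] by simp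
    then show ?thesis by (rule symD[OF sym])
  next
    case 3
    then show ?thesis using ac(3) unfolding adj_via_def by blast
  qed
  then show "(a, b) \<in> (adj_via G (edge_halfedges G - {(v, i), (w, j)}))\<^sup>*" unfolding S_def .
qed

lemma connected_remove_edge:
  assumes wf: "wf_og G" and conn: "og_connected G"
    and v: "v < length G" "i < length (G ! v)" "i' < length (G ! v)" "i \<noteq> i'"
    and e: "G ! v ! i = Ed w j" "G ! v ! i' = Ed w' j'" and path: "(w, w') \<in> (adj_avoid G v)\<^sup>*"
    and u: "u < length G"
  shows "(u, 0) \<in> (adj_via G (edge_halfedges G - {(v, i), (w, j)}))\<^sup>*"
proof -
  have "0 < length G" using v(1) by linarith
  then have "(u, 0) \<in> {(a, b). adj G a b}\<^sup>*" using conn u unfolding og_connected_def by blast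
  moreover have "{(a, b). adj G a b}\<^sup>* \<subseteq> (adj_via G (edge_halfedges G - {(v, i), (w, j)}))\<^sup>*"
    by (rule rtrancl_subset_rtrancl[OF adj_subset_remove_edge[OF wf v e path]])
  ultimately show ?thesis by (rule rev_subsetD)
qed

text \<open>Two distinct ports of a vertex v of a tree lead into different components of
  the graph with v deleted: otherwise one of the two edges could be removed without
  disconnecting the graph, and too few edges would remain.\<close>

lemma tree_ports_separate:
  assumes T: "is_tree G" and v: "v < length G" "i < length (G ! v)" "i' < length (G ! v)" "i \<noteq> i'"
    and e: "G ! v ! i = Ed w j" "G ! v ! i' = Ed w' j'"
  shows "(w, w') \<notin> (adj_avoid G v)\<^sup>*"
proof
  assume path: "(w, w') \<in> (adj_avoid G v)\<^sup>*"
  have wf: "wf_og G" and conn: "og_connected G" and edges: "num_edges G + 1 = length G"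
    using T unfolding is_tree_def by blast+
  define S where "S = edge_halfedges G - {(v, i), (w, j)}"
  have "S \<subseteq> half_edges G" unfolding S_def edge_halfedges_def by blast
  moreover have closed: "\<And>a c b d. (a, c) \<in> S \<Longrightarrow> G ! a ! c = Ed b d \<Longrightarrow> (b, d) \<in> S"
    unfolding S_def by (rule remove_edge_closed[OF wf v(1,2) e(1)])
  moreover have connected: "\<And>u. u < length G \<Longrightarrow> (u, 0) \<in> (adj_via G S)\<^sup>*"
    unfolding S_def by (rule connected_remove_edge[OF wf conn v e path])
  ultimately have "2 * (length G - 1) \<le> card S"
    by (rule connecting_halfedges_card_ge[OF wf]) (use closed connected in auto)
  then show False using card_remove_edge[OF wf v(1,2) e(1)] edges v(1)
    unfolding num_edges_def S_def by linarith
qed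

lemma tree_no_loop:
  assumes T: "is_tree G" and v: "v < length G" "i < length (G ! v)" and e: "G ! v ! i = Ed w j"
  shows "w \<noteq> v"
proof
  assume "w = v"
  moreover have wf: "wf_og G" using T unfolding is_tree_def by blast
  ultimately have "j < length (G ! v)" "(v, j) \<noteq> (v, i)" "G ! v ! j = Ed v i"
    using wf_og_partner[OF wf v e] by blast+
  then show False using tree_ports_separate[OF T v(1,2) _ _ e] \<open>w = v\<close> by auto
qed

text \<open>Port i of v lies on the path from v to the k-th leaf; leaf_port picks that port,
  with the junk value 0 if there is none.\<close>

definition toward_leaf :: "og \<Rightarrow> nat \<Rightarrow> nat \<Rightarrow> nat \<Rightarrow> bool" where
  "toward_leaf G k v i \<longleftrightarrow> i < length (G ! v) \<and> (G ! v ! i = Lf k \<or>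
      (\<exists>w j. G ! v ! i = Ed w j \<and> (w, fst (leaf_at G k)) \<in> (adj_avoid G v)\<^sup>*))"

definition leaf_port :: "og \<Rightarrow> nat \<Rightarrow> nat \<Rightarrow> nat" where
  "leaf_port G k v = (if \<exists>i. toward_leaf G k v i then LEAST i. toward_leaf G k v i else 0)"

lemma rooted_iff_toward_leaf: "rooted G \<longleftrightarrow> cyc_tree G \<and> (\<forall>v < length G. toward_leaf G 0 v 0)"
  unfolding rooted_iff toward_leaf_def by auto

lemma toward_leaf_unique:
  assumes T: "is_tree G" and v: "v < length G" and k: "k < num_leaves G"
    and i: "toward_leaf G k v i" and i': "toward_leaf G k v i'"
  shows "i = i'"
proof -
  have wf: "wf_og G" using T unfolding is_tree_def by blast
  let ?t = "fst (leaf_at G k)"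
  have leaf: "leaf_at G k = (v, a)" if "a < length (G ! v)" "G ! v ! a = Lf k" for a
    by (rule leaf_at_eqI[OF wf v that])
  have edge: "?t \<noteq> v" if "a < length (G ! v)" "G ! v ! a = Ed w j" "(w, ?t) \<in> (adj_avoid G v)\<^sup>*" for a w j
    using tree_no_loop[OF T v that(1,2)] adj_avoid_rtrancl_ne[OF that(3)] by blast
  have i_cases: "G ! v ! i = Lf k \<or> (\<exists>w j. G ! v ! i = Ed w j \<and> (w, ?t) \<in> (adj_avoid G v)\<^sup>*)"
    and i'_cases: "G ! v ! i' = Lf k \<or> (\<exists>w j. G ! v ! i' = Ed w j \<and> (w, ?t) \<in> (adj_avoid G v)\<^sup>*)"
    and lt: "i < length (G ! v)" "i' < length (G ! v)"
    using i i' unfolding toward_leaf_def by blast+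
  show ?thesis
  proof (cases "G ! v ! i = Lf k")
    case True
    then have "?t = v" using leaf[OF lt(1)] by simp
    then have "G ! v ! i' = Lf k" using i'_cases edge[OF lt(2)] by blast
    then show ?thesis using leaf[OF lt(1) True] leaf[OF lt(2)] by simp
  next
    case False
    then obtain w j where w: "G ! v ! i = Ed w j" "(w, ?t) \<in> (adj_avoid G v)\<^sup>*" using i_cases by blast
    then have "?t \<noteq> v" by (rule edge[OF lt(1)])
    then obtain w' j' where w': "G ! v ! i' = Ed w' j'" "(w', ?t) \<in> (adj_avoid G v)\<^sup>*"
      using i'_cases leaf[OF lt(2)] by fastforce
    have "(w, w') \<in> (adj_avoid G v)\<^sup>*"
      using w(2) adj_avoid_rtrancl_sym[OF wf w'(2)] by (rule rtrancl_trans)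
    then show ?thesis using tree_ports_separate[OF T v lt _ w(1) w'(1)] by blast
  qed
qed

lemma adj_path_avoid_or_last_visit:
  assumes "(a, t) \<in> {(a, b). adj G a b}\<^sup>*" "t \<noteq> v"
  shows "(a, t) \<in> (adj_avoid G v)\<^sup>* \<or> (\<exists>w. adj G v w \<and> (w, t) \<in> (adj_avoid G v)\<^sup>*)"
  using assms(1)
proof (induction rule: converse_rtrancl_induct)
  case (step a b)
  then have ab: "adj G a b" by simp
  from step.IH show ?case
  proof
    assume bt: "(b, t) \<in> (adj_avoid G v)\<^sup>*"
    have "b \<noteq> v" using adj_avoid_rtrancl_ne'[OF bt assms(2)] .
    then show ?thesis
      using ab bt by (cases "a = v") (auto simp: adj_avoid_def intro: converse_rtrancl_into_rtrancl)
  qed simp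
qed simp

lemma toward_leaf_exists:
  assumes T: "is_tree G" and v: "v < length G" and k: "k < num_leaves G"
  shows "\<exists>i. toward_leaf G k v i"
proof -
  have wf: "wf_og G" and conn: "og_connected G" using T unfolding is_tree_def by blast+
  let ?t = "fst (leaf_at G k)"
  have t: "?t < length G" "snd (leaf_at G k) < length (G ! ?t)" "G ! ?t ! snd (leaf_at G k) = Lf k"
    using leaf_at_spec[OF wf k] by simp_all
  show ?thesis
  proof (cases "?t = v")
    case True
    then show ?thesis using t unfolding toward_leaf_def by metis
  next
    case False
    have "(v, ?t) \<in> {(a, b). adj G a b}\<^sup>*" using conn v t(1) unfolding og_connected_def by blast
    then have "\<exists>w. adj G v w \<and> (w, ?t) \<in> (adj_avoid G v)\<^sup>*"
      using adj_path_avoid_or_last_visit[OF _ False] adj_avoid_rtrancl_from False by blast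
    then show ?thesis unfolding toward_leaf_def adj_iff by blast
  qed
qed

lemma toward_leaf_leaf_port:
  assumes "is_tree G" "v < length G" "k < num_leaves G"
  shows "toward_leaf G k v (leaf_port G k v)"
  using toward_leaf_exists[OF assms] unfolding leaf_port_def by (simp add: LeastI_ex)

lemma leaf_port_eqI:
  assumes "is_tree G" "v < length G" "k < num_leaves G" "toward_leaf G k v i"
  shows "leaf_port G k v = i"
  using toward_leaf_unique[OF assms(1-3) toward_leaf_leaf_port[OF assms(1-3)] assms(4)] .

lemma leaf_port_lt:
  assumes "is_tree G" "v < length G" "k < num_leaves G"
  shows "leaf_port G k v < length (G ! v)"
  using toward_leaf_leaf_port[OF assms] unfolding toward_leaf_def by blast

lemma leaf_port_lt_length:
  assumes "i < length (G ! v)"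
  shows "leaf_port G k v < length (G ! v)"
proof (cases "\<exists>i. toward_leaf G k v i")
  case True
  then have "toward_leaf G k v (LEAST i. toward_leaf G k v i)" by (rule LeastI_ex)
  then show ?thesis using True unfolding leaf_port_def toward_leaf_def by simp
next
  case False
  then have "leaf_port G k v = 0" unfolding leaf_port_def by (rule if_not_P)
  then show ?thesis using assms by linarith
qed

lemma cyc_tree_degree_pos:
  assumes "cyc_tree G" "v < length G"
  shows "0 < length (G ! v)"
  using leaf_port_lt[OF cyc_treeD(1)[OF assms(1)] assms(2) cyc_treeD(3)[OF assms(1)]] by linarith

text \<open>The vertices of q that come from vertex l of p, in increasing order; pos \<sigma> l
  enumerates this list and rank \<sigma> x is the position of x in it.\<close>

abbreviation fiber :: "nat list \<Rightarrow> nat \<Rightarrow> nat list" where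
  "fiber \<sigma> l \<equiv> filter (\<lambda>y. \<sigma> ! y = l) [0..<length \<sigma>]"

lemma upt_split_at:
  assumes "x < n"
  shows "[0..<n] = [0..<x] @ x # [Suc x..<n]"
proof -
  have "[0..<x + (n - x)] = [0..<x] @ [x..<x + (n - x)]"
    by (rule upt_add_eq_append) simp
  then show ?thesis using assms upt_conv_Cons[OF assms] by simp
qed

lemma pos_rank:
  assumes "x < length \<sigma>"
  shows "pos \<sigma> (\<sigma> ! x) (rank \<sigma> x) = x"
  unfolding pos_def rank_def upt_split_at[OF assms] by (simp add: nth_append)

lemma rank_lt:
  assumes "x < length \<sigma>"
  shows "rank \<sigma> x < length (fiber \<sigma> (\<sigma> ! x))"
  unfolding rank_def upt_split_at[OF assms] by simp

lemma length_fiber: "length (fiber \<sigma> l) = length (filter (\<lambda>y. y = l) \<sigma>)"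
proof -
  have "filter (\<lambda>y. y = l) \<sigma> = filter (\<lambda>y. y = l) (map (\<lambda>y. \<sigma> ! y) [0..<length \<sigma>])"
    by (simp add: map_nth)
  also have "\<dots> = map (\<lambda>y. \<sigma> ! y) (fiber \<sigma> l)"
    by (simp add: filter_map o_def)
  finally show ?thesis by simp
qed

lemma pos_spec:
  assumes "r < length (fiber \<sigma> l)"
  shows "pos \<sigma> l r < length \<sigma> \<and> \<sigma> ! (pos \<sigma> l r) = l \<and> rank \<sigma> (pos \<sigma> l r) = r"
proof -
  have "pos \<sigma> l r \<in> set (fiber \<sigma> l)" using assms unfolding pos_def by (rule nth_mem)
  then have x: "pos \<sigma> l r < length \<sigma>" "\<sigma> ! pos \<sigma> l r = l" by simp_all
  then have "fiber \<sigma> l ! rank \<sigma> (pos \<sigma> l r) = fiber \<sigma> l ! r"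
    using pos_rank[OF x(1)] unfolding pos_def by simp
  moreover have "rank \<sigma> (pos \<sigma> l r) < length (fiber \<sigma> l)" using rank_lt[OF x(1)] x(2) by simp
  ultimately have "rank \<sigma> (pos \<sigma> l r) = r" using assms by (simp add: nth_eq_iff_index_eq)
  then show ?thesis using x by simp
qed

lemma map_rank_fiber: "map (rank \<sigma>) (fiber \<sigma> l) = [0..<length (fiber \<sigma> l)]"
  by (rule nth_equalityI) (use pos_spec in \<open>auto simp: pos_def\<close>)

lemma rank_inj:
  assumes "x < length \<sigma>" "x' < length \<sigma>" "\<sigma> ! x = \<sigma> ! x'" "rank \<sigma> x = rank \<sigma> x'"
  shows "x = x'"
  using pos_rank[OF assms(1)] pos_rank[OF assms(2)] assms(3,4) by metis

lemma count_map_rank_fiber: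
  assumes "set \<tau> \<subseteq> {..<length \<sigma>}" and r: "r < length (fiber \<sigma> l)"
  shows "length (filter (\<lambda>y. y = r) (map (rank \<sigma>) (filter (\<lambda>y. \<sigma> ! y = l) \<tau>)))
       = length (filter (\<lambda>y. y = pos \<sigma> l r) \<tau>)"
proof -
  have "filter (\<lambda>y. \<sigma> ! y = l \<and> rank \<sigma> y = r) \<tau> = filter (\<lambda>y. y = pos \<sigma> l r) \<tau>"
  proof (rule filter_cong[OF refl])
    fix y assume "y \<in> set \<tau>"
    then have "y < length \<sigma>" using assms(1) by auto
    then show "(\<sigma> ! y = l \<and> rank \<sigma> y = r) = (y = pos \<sigma> l r)"
      using pos_rank[of y \<sigma>] pos_spec[OF r] by auto
  qed
  then show ?thesis by (simp add: filter_map o_def conj_commute)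
qed

lemma filter_eq_upt: "l < n \<Longrightarrow> filter (\<lambda>y. y = l) [0..<n] = [l]"
  by (subst upt_split_at) (auto simp: filter_empty_conv)

lemma fiber_upt:
  assumes "l < n"
  shows "fiber [0..<n] l = [l]"
proof -
  have "fiber [0..<n] l = filter (\<lambda>y. y = l) [0..<n]" by (rule filter_cong) auto
  then show ?thesis using filter_eq_upt[OF assms] by simp
qed

lemma rank_upt: "y < n \<Longrightarrow> rank [0..<n] y = 0"
  unfolding rank_def by (auto simp: filter_empty_conv)

lemma pos_upt:
  assumes "l < n"
  shows "pos [0..<n] l 0 = l"
  unfolding pos_def fiber_upt[OF assms] by simp

lemma map_nth_upt: "set \<sigma> \<subseteq> {..<n} \<Longrightarrow> map ((!) [0..<n]) \<sigma> = \<sigma>"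
  by (rule nth_equalityI) (auto simp: subset_iff)

lemma map_rank_upt_filter:
  assumes "set \<sigma> \<subseteq> {..<n}" "l < n"
  shows "map (rank [0..<n]) (filter (\<lambda>y. [0..<n] ! y = l) \<sigma>) = replicate (length (filter (\<lambda>y. y = l) \<sigma>)) 0"
proof -
  have "filter (\<lambda>y. [0..<n] ! y = l) \<sigma> = filter (\<lambda>y. y = l) \<sigma>"
    by (rule filter_cong) (use assms(1) in auto)
  moreover have "map (rank [0..<n]) (filter (\<lambda>y. y = l) \<sigma>) = replicate (length (filter (\<lambda>y. y = l) \<sigma>)) 0"
    using rank_upt[OF assms(2)] by (simp add: map_replicate_const[symmetric] cong: map_cong)
  ultimately show ?thesis by simp
qed

lemma rank_replicate_0: "x < c \<Longrightarrow> rank (replicate c 0) x = x"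
  unfolding rank_def by (simp add: filter_True)

lemma pos_replicate_0: "r < c \<Longrightarrow> pos (replicate c 0) 0 r = r"
  unfolding pos_def by (simp add: filter_True)

section \<open>Permuting the ports of each vertex\<close>

text \<open>The rotation that moves port \<rho> to the front: the new port i is the old port
  front_perm \<rho> i, and the old port j becomes the new port front_perm_inv \<rho> j.\<close>

definition front_perm :: "nat \<Rightarrow> nat \<Rightarrow> nat" where
  "front_perm \<rho> i = (if i = 0 then \<rho> else if i \<le> \<rho> then i - 1 else i)"

definition front_perm_inv :: "nat \<Rightarrow> nat \<Rightarrow> nat" where
  "front_perm_inv \<rho> j = (if j = \<rho> then 0 else if j < \<rho> then j + 1 else j)"

lemma front_perm_inv_front_perm [simp]: "front_perm_inv \<rho> (front_perm \<rho> i) = i"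
  and front_perm_front_perm_inv [simp]: "front_perm \<rho> (front_perm_inv \<rho> j) = j"
  and front_perm_0 [simp]: "front_perm 0 i = i"
  and front_perm_inv_0 [simp]: "front_perm_inv 0 i = i"
  and front_perm_inv_self [simp]: "front_perm_inv \<rho> \<rho> = 0"
  unfolding front_perm_def front_perm_inv_def by auto

lemma front_perm_inv_0_eq: "front_perm_inv 0 = (\<lambda>i. i)"
  by (rule ext) simp

lemma front_perm_lt: "\<rho> < d \<Longrightarrow> i < d \<Longrightarrow> front_perm \<rho> i < d"
  and front_perm_inv_lt: "\<rho> < d \<Longrightarrow> i < d \<Longrightarrow> front_perm_inv \<rho> i < d"
  unfolding front_perm_def front_perm_inv_def by auto

lemma bij_betw_front_perm: "\<rho> < d \<Longrightarrow> bij_betw (front_perm \<rho>) {..<d} {..<d}"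
  by (rule bij_betw_byWitness[where f' = "front_perm_inv \<rho>"]) (auto simp: front_perm_lt front_perm_inv_lt)

lemma bij_betw_front_perm_inv: "\<rho> < d \<Longrightarrow> bij_betw (front_perm_inv \<rho>) {..<d} {..<d}"
  by (rule bij_betw_byWitness[where f' = "front_perm \<rho>"]) (auto simp: front_perm_lt front_perm_inv_lt)

definition port_rename :: "(nat \<Rightarrow> nat \<Rightarrow> nat) \<Rightarrow> hend \<Rightarrow> hend" where
  "port_rename g e = (case e of Lf m \<Rightarrow> Lf m | Ed w j \<Rightarrow> Ed w (g w j))"

lemma port_rename_simps [simp]: "port_rename g (Lf m) = Lf m" "port_rename g (Ed w j) = Ed w (g w j)"
  by (simp_all add: port_rename_def)

text \<open>The new port i of v is the old port f v i; g is the inverse of f and renames the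
  far ends of edges accordingly.\<close>

definition permute_ports :: "(nat \<Rightarrow> nat \<Rightarrow> nat) \<Rightarrow> (nat \<Rightarrow> nat \<Rightarrow> nat) \<Rightarrow> og \<Rightarrow> og" where
  "permute_ports f g G =
     map (\<lambda>v. map (\<lambda>i. port_rename g (G ! v ! f v i)) [0..<length (G ! v)]) [0..<length G]"

definition ports_perm :: "(nat \<Rightarrow> nat \<Rightarrow> nat) \<Rightarrow> (nat \<Rightarrow> nat \<Rightarrow> nat) \<Rightarrow> og \<Rightarrow> bool" where
  "ports_perm f g G \<longleftrightarrow> (\<forall>v < length G. \<forall>i < length (G ! v).
      f v i < length (G ! v) \<and> g v i < length (G ! v) \<and> f v (g v i) = i \<and> g v (f v i) = i)"

lemma ports_permD:
  assumes "ports_perm f g G" "v < length G" "i < length (G ! v)"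
  shows "f v i < length (G ! v)" "g v i < length (G ! v)" "f v (g v i) = i" "g v (f v i) = i"
  using assms unfolding ports_perm_def by blast+

lemma ports_perm_inverse: "ports_perm f g G \<Longrightarrow> ports_perm g f (permute_ports f g G)"
  by (simp add: ports_perm_def permute_ports_def)

lemma ports_perm_id: "ports_perm (\<lambda>v i. i) (\<lambda>v i. i) G"
  by (simp add: ports_perm_def)

lemma bij_betw_ports_perm:
  assumes "ports_perm f g G" "v < length G"
  shows "bij_betw (f v) {..<length (G ! v)} {..<length (G ! v)}"
  by (rule bij_betw_byWitness[where f' = "g v"]) (use ports_permD[OF assms] in auto)

lemma length_permute_ports [simp]: "length (permute_ports f g G) = length G"
  and length_permute_ports_nth [simp]: "v < length G \<Longrightarrow> length (permute_ports f g G ! v) = length (G ! v)"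
  and permute_ports_nth: "v < length G \<Longrightarrow> i < length (G ! v) \<Longrightarrow>
      permute_ports f g G ! v ! i = port_rename g (G ! v ! f v i)"
  by (simp_all add: permute_ports_def)

lemma half_edges_permute_ports [simp]: "half_edges (permute_ports f g G) = half_edges G"
  by (auto simp: half_edges_def)

lemma permute_ports_at_inverse:
  assumes "ports_perm f g G" "v < length G" "i < length (G ! v)"
  shows "permute_ports f g G ! v ! g v i = port_rename g (G ! v ! i)"
  using permute_ports_nth[OF assms(2) ports_permD(2)[OF assms]] ports_permD(3)[OF assms] by simp

lemma permute_ports_Lf_iff:
  assumes "v < length G" "i < length (G ! v)"
  shows "permute_ports f g G ! v ! i = Lf k \<longleftrightarrow> G ! v ! f v i = Lf k"
  using assms by (cases "G ! v ! f v i") (simp_all add: permute_ports_nth)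

lemma permute_ports_Ed_iff:
  assumes "v < length G" "i < length (G ! v)"
  shows "permute_ports f g G ! v ! i = Ed w j' \<longleftrightarrow> (\<exists>j. G ! v ! f v i = Ed w j \<and> j' = g w j)"
  using assms by (cases "G ! v ! f v i") (auto simp: permute_ports_nth)

lemma adj_permute_ports:
  assumes P: "ports_perm f g G"
  shows "adj (permute_ports f g G) a b \<longleftrightarrow> adj G a b"
proof
  assume "adj (permute_ports f g G) a b"
  then obtain i j where "a < length G" "i < length (G ! a)" "permute_ports f g G ! a ! i = Ed b j"
    unfolding adj_iff by auto
  then show "adj G a b" unfolding adj_iff using ports_permD[OF P] permute_ports_Ed_iff by metis
next
  assume "adj G a b"
  then obtain i j where a: "a < length G" "i < length (G ! a)" "G ! a ! i = Ed b j"
    unfolding adj_iff by auto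
  then have "permute_ports f g G ! a ! g a i = Ed b (g b j)"
    using permute_ports_at_inverse[OF P a(1,2)] by simp
  then show "adj (permute_ports f g G) a b" unfolding adj_iff using a ports_permD(2)[OF P a(1,2)] by auto
qed

lemma adj_avoid_permute_ports: "ports_perm f g G \<Longrightarrow> adj_avoid (permute_ports f g G) v = adj_avoid G v"
  unfolding adj_avoid_def using adj_permute_ports by blast

lemma og_connected_permute_ports: "ports_perm f g G \<Longrightarrow> og_connected (permute_ports f g G) = og_connected G"
proof -
  assume "ports_perm f g G"
  then have "{(a, b). adj (permute_ports f g G) a b} = {(a, b). adj G a b}"
    using adj_permute_ports by simp
  then show ?thesis unfolding og_connected_def by simp
qed

definition port_map :: "(nat \<Rightarrow> nat \<Rightarrow> nat) \<Rightarrow> nat \<times> nat \<Rightarrow> nat \<times> nat" where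
  "port_map g h = (fst h, g (fst h) (snd h))"

lemma inj_on_port_map:
  assumes P: "ports_perm f g G"
  shows "inj_on (port_map g) (half_edges G)"
proof (rule inj_onI)
  fix h h' assume h: "h \<in> half_edges G" "h' \<in> half_edges G" "port_map g h = port_map g h'"
  obtain v i v' i' where hv: "h = (v, i)" "h' = (v', i')" by (cases h, cases h')
  then have v: "v' = v" "g v i = g v i'" using h(3) unfolding port_map_def by auto
  have "i = f v (g v i)" using ports_permD(3)[OF P] h(1) hv(1) by simp
  also have "\<dots> = i'" using ports_permD(3)[OF P] h(2) hv(2) v by simp
  finally show "h = h'" using hv v by simp
qed

lemma card_permute_ports_kind:
  assumes P: "ports_perm f g G"
    and kind: "\<And>e. Q (port_rename g e) \<longleftrightarrow> Q e"
  shows "card {h \<in> half_edges (permute_ports f g G). Q (hend_at (permute_ports f g G) h)}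
       = card {h \<in> half_edges G. Q (hend_at G h)}"
proof -
  let ?A = "{h \<in> half_edges G. Q (hend_at G h)}"
  have "port_map g ` ?A = {h \<in> half_edges (permute_ports f g G). Q (hend_at (permute_ports f g G) h)}"
  proof (intro set_eqI iffI)
    fix h assume "h \<in> port_map g ` ?A"
    then obtain v i where vi: "v < length G" "i < length (G ! v)" "Q (G ! v ! i)" "h = (v, g v i)"
      unfolding port_map_def by auto
    have "permute_ports f g G ! v ! g v i = port_rename g (G ! v ! i)"
      by (rule permute_ports_at_inverse[OF P vi(1,2)])
    then show "h \<in> {h \<in> half_edges (permute_ports f g G). Q (hend_at (permute_ports f g G) h)}"
      using vi ports_permD(2)[OF P vi(1,2)] kind by simp
  next
    fix h assume "h \<in> {h \<in> half_edges (permute_ports f g G). Q (hend_at (permute_ports f g G) h)}"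
    then obtain v i where vi: "v < length G" "i < length (G ! v)" "Q (permute_ports f g G ! v ! i)"
      and h: "h = (v, i)" by (cases h) auto
    have "Q (G ! v ! f v i)" using vi(3) permute_ports_nth[OF vi(1,2)] kind by simp
    then have "(v, f v i) \<in> ?A" using vi(1) ports_permD(1)[OF P vi(1,2)] by simp
    moreover have "h = port_map g (v, f v i)"
      using h ports_permD(4)[OF P vi(1,2)] unfolding port_map_def by simp
    ultimately show "h \<in> port_map g ` ?A" by blast
  qed
  moreover have "inj_on (port_map g) ?A"
    by (rule inj_on_subset[OF inj_on_port_map[OF P]]) blast
  ultimately show ?thesis using card_image by fastforce
qed

lemma num_leaves_permute_ports:
  assumes "ports_perm f g G"
  shows "num_leaves (permute_ports f g G) = num_leaves G"
proof -
  have "(\<exists>k. port_rename g e = Lf k) \<longleftrightarrow> (\<exists>k. e = Lf k)" for e by (cases e) simp_all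
  then show ?thesis unfolding num_leaves_def leaf_halfedges_def by (rule card_permute_ports_kind[OF assms])
qed

lemma num_edges_permute_ports:
  assumes "ports_perm f g G"
  shows "num_edges (permute_ports f g G) = num_edges G"
proof -
  have "(\<exists>w j. port_rename g e = Ed w j) \<longleftrightarrow> (\<exists>w j. e = Ed w j)" for e by (cases e) simp_all
  then have "card (edge_halfedges (permute_ports f g G)) = card (edge_halfedges G)"
    unfolding edge_halfedges_def by (rule card_permute_ports_kind[OF assms])
  then show ?thesis unfolding num_edges_def by simp
qed

lemma leaf_labels_permute_ports:
  assumes P: "ports_perm f g G"
  shows "{k. \<exists>h \<in> half_edges (permute_ports f g G). hend_at (permute_ports f g G) h = Lf k}
       = {k. \<exists>h \<in> half_edges G. hend_at G h = Lf k}"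
proof (intro set_eqI iffI; simp only: mem_Collect_eq)
  fix k assume "\<exists>h \<in> half_edges (permute_ports f g G). hend_at (permute_ports f g G) h = Lf k"
  then obtain v i where h: "v < length G" "i < length (G ! v)" "permute_ports f g G ! v ! i = Lf k" by auto
  then have "G ! v ! f v i = Lf k" by (simp add: permute_ports_Lf_iff)
  then show "\<exists>h \<in> half_edges G. hend_at G h = Lf k" using ports_permD(1)[OF P h(1,2)] h(1)
    by (intro bexI[of _ "(v, f v i)"]) simp_all
next
  fix k assume "\<exists>h \<in> half_edges G. hend_at G h = Lf k"
  then obtain v i where h: "v < length G" "i < length (G ! v)" "G ! v ! i = Lf k" by auto
  then have "permute_ports f g G ! v ! g v i = Lf k" using permute_ports_at_inverse[OF P] by simp
  then show "\<exists>h \<in> half_edges (permute_ports f g G). hend_at (permute_ports f g G) h = Lf k"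
    using ports_permD(2)[OF P h(1,2)] h(1) by (intro bexI[of _ "(v, g v i)"]) simp_all
qed

lemma wf_og_permute_ports:
  assumes P: "ports_perm f g G" and wf: "wf_og G"
  shows "wf_og (permute_ports f g G)"
proof (rule wf_ogI)
  fix v i w j' assume "v < length (permute_ports f g G)" "i < length (permute_ports f g G ! v)"
    and e: "permute_ports f g G ! v ! i = Ed w j'"
  then have vi: "v < length G" "i < length (G ! v)" by simp_all
  obtain j where j: "G ! v ! f v i = Ed w j" "j' = g w j"
    using e permute_ports_Ed_iff[OF vi] by blast
  note fi = ports_permD(1,4)[OF P vi]
  have w: "w < length G" "j < length (G ! w)" "(w, j) \<noteq> (v, f v i)" "G ! w ! j = Ed v (f v i)"
    using wf_og_partner[OF wf vi(1) fi(1) j(1)] by blast+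
  have "permute_ports f g G ! w ! g w j = Ed v i"
    using permute_ports_at_inverse[OF P w(1,2)] w(4) fi(2) by simp
  moreover have "(w, g w j) \<noteq> (v, i)" using w(3) ports_permD(3)[OF P w(1,2)] by auto
  ultimately show "w < length (permute_ports f g G) \<and> j' < length (permute_ports f g G ! w)
      \<and> (w, j') \<noteq> (v, i) \<and> permute_ports f g G ! w ! j' = Ed v i"
    using j(2) w(1) ports_permD(2)[OF P w(1,2)] by simp
next
  fix v i v' i' k
  assume "v < length (permute_ports f g G)" "i < length (permute_ports f g G ! v)"
    "v' < length (permute_ports f g G)" "i' < length (permute_ports f g G ! v')"
    and e: "permute_ports f g G ! v ! i = Lf k" "permute_ports f g G ! v' ! i' = Lf k"
  then have vi: "v < length G" "i < length (G ! v)" "v' < length G" "i' < length (G ! v')" by simp_all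
  have "G ! v ! f v i = Lf k" "G ! v' ! f v' i' = Lf k"
    using e permute_ports_Lf_iff[OF vi(1,2)] permute_ports_Lf_iff[OF vi(3,4)] by simp_all
  then have "v' = v \<and> f v' i' = f v i"
    using wf_og_leaf_unique[OF wf vi(1) ports_permD(1)[OF P vi(1,2)] _ vi(3) ports_permD(1)[OF P vi(3,4)]]
    by blast
  then show "(v', i') = (v, i)" using ports_permD(4)[OF P vi(1,2)] ports_permD(4)[OF P vi(3,4)] by metis
next
  show "{k. \<exists>h \<in> half_edges (permute_ports f g G). hend_at (permute_ports f g G) h = Lf k}
      = {..<num_leaves (permute_ports f g G)}"
    unfolding leaf_labels_permute_ports[OF P] num_leaves_permute_ports[OF P] by (rule wf_og_leaf_labels[OF wf])
qed

lemma cyc_tree_permute_ports: "ports_perm f g G \<Longrightarrow> cyc_tree G \<Longrightarrow> cyc_tree (permute_ports f g G)"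
  unfolding cyc_tree_def is_tree_def
  by (simp add: wf_og_permute_ports og_connected_permute_ports num_edges_permute_ports num_leaves_permute_ports)

lemma leaf_at_permute_ports:
  assumes P: "ports_perm f g G" and wf: "wf_og G" and k: "k < num_leaves G"
  shows "leaf_at (permute_ports f g G) k = (fst (leaf_at G k), g (fst (leaf_at G k)) (snd (leaf_at G k)))"
proof -
  obtain v i where vi: "leaf_at G k = (v, i)" by (cases "leaf_at G k")
  have p: "v < length G" "i < length (G ! v)" "G ! v ! i = Lf k" using leaf_at_spec[OF wf k] vi by simp_all
  then have "permute_ports f g G ! v ! g v i = Lf k" using permute_ports_at_inverse[OF P] by simp
  then have "leaf_at (permute_ports f g G) k = (v, g v i)"
    using leaf_at_eqI[OF wf_og_permute_ports[OF P wf], of v "g v i" k] p(1) ports_permD(2)[OF P p(1,2)] by simp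
  then show ?thesis using vi by simp
qed

lemma permute_ports_inverse:
  assumes P: "ports_perm f g G" and wf: "wf_og G"
  shows "permute_ports g f (permute_ports f g G) = G"
proof (rule nth_equalityI)
  fix v assume "v < length (permute_ports g f (permute_ports f g G))"
  then have v: "v < length G" by simp
  show "permute_ports g f (permute_ports f g G) ! v = G ! v"
  proof (rule nth_equalityI)
    fix i assume "i < length (permute_ports g f (permute_ports f g G) ! v)"
    then have i: "i < length (G ! v)" using v by simp
    have "permute_ports g f (permute_ports f g G) ! v ! i = port_rename f (port_rename g (G ! v ! i))"
      using permute_ports_nth[of v "permute_ports f g G" i g f] permute_ports_at_inverse[OF P v i]
        v i ports_permD(2)[OF P v i] by simp
    also have "\<dots> = G ! v ! i"
    proof (cases "G ! v ! i")
      case (Ed w j)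
      then show ?thesis using wf_og_partner[OF wf v i Ed] ports_permD(3)[OF P] by simp
    qed simp
    finally show "permute_ports g f (permute_ports f g G) ! v ! i = G ! v ! i" .
  qed (use v in simp)
qed simp

lemma permute_ports_id: "permute_ports (\<lambda>v i. i) (\<lambda>v i. i) G = G"
  by (intro nth_equalityI) (auto simp: permute_ports_def port_rename_def nth_equalityI split: hend.split)

definition relabel_hend :: "(nat \<Rightarrow> nat) \<Rightarrow> hend \<Rightarrow> hend" where
  "relabel_hend s e = (case e of Lf m \<Rightarrow> Lf (s m) | Ed w j \<Rightarrow> Ed w j)"

lemma relabel_hend_simps [simp]: "relabel_hend s (Lf m) = Lf (s m)" "relabel_hend s (Ed w j) = Ed w j"
  by (simp_all add: relabel_hend_def)

definition relabel_leaves :: "(nat \<Rightarrow> nat) \<Rightarrow> og \<Rightarrow> og" where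
  "relabel_leaves s G = map (map (relabel_hend s)) G"

lemma length_relabel_leaves [simp]: "length (relabel_leaves s G) = length G"
  and length_relabel_leaves_nth [simp]: "v < length G \<Longrightarrow> length (relabel_leaves s G ! v) = length (G ! v)"
  and relabel_leaves_nth: "v < length G \<Longrightarrow> i < length (G ! v) \<Longrightarrow>
      relabel_leaves s G ! v ! i = relabel_hend s (G ! v ! i)"
  by (simp_all add: relabel_leaves_def)

lemma relabel_leaves_id: "relabel_leaves (\<lambda>i. i) G = G"
proof -
  have "relabel_hend (\<lambda>i. i) = id" by (rule ext) (simp add: relabel_hend_def split: hend.split)
  then show ?thesis by (simp add: relabel_leaves_def)
qed

lemma half_edges_relabel_leaves [simp]: "half_edges (relabel_leaves s G) = half_edges G"
  by (auto simp: half_edges_def)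

lemma relabel_leaves_Ed_iff: "v < length G \<Longrightarrow> i < length (G ! v) \<Longrightarrow>
    relabel_leaves s G ! v ! i = Ed w j \<longleftrightarrow> G ! v ! i = Ed w j"
  by (cases "G ! v ! i") (simp_all add: relabel_leaves_nth)

lemma relabel_leaves_Lf_iff: "v < length G \<Longrightarrow> i < length (G ! v) \<Longrightarrow>
    relabel_leaves s G ! v ! i = Lf k \<longleftrightarrow> (\<exists>m. G ! v ! i = Lf m \<and> k = s m)"
  by (cases "G ! v ! i") (auto simp: relabel_leaves_nth)

lemma leaf_halfedges_relabel_leaves [simp]: "leaf_halfedges (relabel_leaves s G) = leaf_halfedges G"
  unfolding leaf_halfedges_def using relabel_leaves_Lf_iff by fastforce

lemma edge_halfedges_relabel_leaves [simp]: "edge_halfedges (relabel_leaves s G) = edge_halfedges G"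
  unfolding edge_halfedges_def using relabel_leaves_Ed_iff by fastforce

lemma num_leaves_relabel_leaves [simp]: "num_leaves (relabel_leaves s G) = num_leaves G"
  and num_edges_relabel_leaves [simp]: "num_edges (relabel_leaves s G) = num_edges G"
  by (simp_all add: num_leaves_def num_edges_def)

lemma adj_relabel_leaves [simp]: "adj (relabel_leaves s G) a b = adj G a b"
  unfolding adj_iff using relabel_leaves_Ed_iff by fastforce

lemma adj_avoid_relabel_leaves [simp]: "adj_avoid (relabel_leaves s G) v = adj_avoid G v"
  and og_connected_relabel_leaves [simp]: "og_connected (relabel_leaves s G) = og_connected G"
  by (simp_all add: adj_avoid_def og_connected_def)

lemma leaf_labels_relabel_leaves:
  "{k. \<exists>h \<in> half_edges (relabel_leaves s G). hend_at (relabel_leaves s G) h = Lf k}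
    = s ` {k. \<exists>h \<in> half_edges G. hend_at G h = Lf k}"
proof (intro set_eqI iffI)
  fix k assume "k \<in> {k. \<exists>h \<in> half_edges (relabel_leaves s G). hend_at (relabel_leaves s G) h = Lf k}"
  then obtain v i where vi: "v < length G" "i < length (G ! v)" "relabel_leaves s G ! v ! i = Lf k" by auto
  then obtain m where "G ! v ! i = Lf m" "k = s m" using relabel_leaves_Lf_iff[OF vi(1,2)] by auto
  then show "k \<in> s ` {k. \<exists>h \<in> half_edges G. hend_at G h = Lf k}"
    using vi by (intro image_eqI[of _ _ m] CollectI bexI[of _ "(v, i)"]) simp_all
next
  fix k assume "k \<in> s ` {k. \<exists>h \<in> half_edges G. hend_at G h = Lf k}"
  then obtain m v i where vi: "v < length G" "i < length (G ! v)" "G ! v ! i = Lf m" "k = s m" by auto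
  then have "relabel_leaves s G ! v ! i = Lf k" using relabel_leaves_nth[OF vi(1,2)] by simp
  then show "k \<in> {k. \<exists>h \<in> half_edges (relabel_leaves s G). hend_at (relabel_leaves s G) h = Lf k}"
    using vi by (intro CollectI bexI[of _ "(v, i)"]) simp_all
qed

lemma wf_og_relabel_leaves:
  assumes wf: "wf_og G" and s: "bij_betw s {..<num_leaves G} {..<num_leaves G}"
  shows "wf_og (relabel_leaves s G)"
proof (rule wf_ogI)
  fix v i w j assume "v < length (relabel_leaves s G)" "i < length (relabel_leaves s G ! v)"
    and e: "relabel_leaves s G ! v ! i = Ed w j"
  then have vi: "v < length G" "i < length (G ! v)" by simp_all
  then have "G ! v ! i = Ed w j" using e relabel_leaves_Ed_iff by blast
  from wf_og_partner[OF wf vi this]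
  show "w < length (relabel_leaves s G) \<and> j < length (relabel_leaves s G ! w)
      \<and> (w, j) \<noteq> (v, i) \<and> relabel_leaves s G ! w ! j = Ed v i"
    by (simp add: relabel_leaves_Ed_iff)
next
  fix v i v' i' k
  assume "v < length (relabel_leaves s G)" "i < length (relabel_leaves s G ! v)"
    "v' < length (relabel_leaves s G)" "i' < length (relabel_leaves s G ! v')"
    and e: "relabel_leaves s G ! v ! i = Lf k" "relabel_leaves s G ! v' ! i' = Lf k"
  then have vi: "v < length G" "i < length (G ! v)" "v' < length G" "i' < length (G ! v')" by simp_all
  obtain m m' where m: "G ! v ! i = Lf m" "G ! v' ! i' = Lf m'" "s m = s m'"
    using e relabel_leaves_Lf_iff[OF vi(1,2)] relabel_leaves_Lf_iff[OF vi(3,4)] by metis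
  have "m < num_leaves G" "m' < num_leaves G"
    using wf_og_leaf_label_lt[OF wf vi(1,2) m(1)] wf_og_leaf_label_lt[OF wf vi(3,4) m(2)] .
  then have "m = m'" using m(3) s unfolding bij_betw_def inj_on_def by blast
  then show "(v', i') = (v, i)" using wf_og_leaf_unique[OF wf vi(1,2) m(1) vi(3,4)] m(2) by simp
next
  show "{k. \<exists>h \<in> half_edges (relabel_leaves s G). hend_at (relabel_leaves s G) h = Lf k}
      = {..<num_leaves (relabel_leaves s G)}"
    unfolding leaf_labels_relabel_leaves using wf_og_leaf_labels[OF wf] s unfolding bij_betw_def by simp
qed

lemma cyc_tree_relabel_leaves:
  "cyc_tree G \<Longrightarrow> bij_betw s {..<num_leaves G} {..<num_leaves G} \<Longrightarrow> cyc_tree (relabel_leaves s G)"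
  unfolding cyc_tree_def is_tree_def using wf_og_relabel_leaves by simp

lemma leaf_at_relabel_leaves:
  assumes wf: "wf_og G" and s: "bij_betw s {..<num_leaves G} {..<num_leaves G}" and m: "m < num_leaves G"
  shows "leaf_at (relabel_leaves s G) (s m) = leaf_at G m"
proof -
  obtain v i where vi: "leaf_at G m = (v, i)" by (cases "leaf_at G m")
  have p: "v < length G" "i < length (G ! v)" "G ! v ! i = Lf m" using leaf_at_spec[OF wf m] vi by simp_all
  have "relabel_leaves s G ! v ! i = Lf (s m)" using relabel_leaves_nth[OF p(1,2)] p(3) by simp
  then show ?thesis using leaf_at_eqI[OF wf_og_relabel_leaves[OF wf s], of v i "s m"] p vi by simp
qed

definition perm_corolla :: "(nat \<Rightarrow> nat) \<Rightarrow> nat \<Rightarrow> og" where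
  "perm_corolla s d = [map (\<lambda>i. Lf (s i)) [0..<d]]"

lemma perm_corolla_eq_relabel: "perm_corolla s d = relabel_leaves s (corolla d)"
  by (simp add: perm_corolla_def relabel_leaves_def corolla_def)

lemma corolla_eq_perm_corolla: "corolla d = perm_corolla (\<lambda>i. i) d"
  by (simp add: perm_corolla_def corolla_def)

lemma length_corolla [simp]: "length (corolla d) = 1"
  and length_corolla_0 [simp]: "length (corolla d ! 0) = d"
  and corolla_nth: "i < d \<Longrightarrow> corolla d ! 0 ! i = Lf i"
  by (simp_all add: corolla_def)

lemma length_perm_corolla [simp]: "length (perm_corolla s d) = 1"
  and length_perm_corolla_0 [simp]: "length (perm_corolla s d ! 0) = d"
  and perm_corolla_nth: "i < d \<Longrightarrow> perm_corolla s d ! 0 ! i = Lf (s i)"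
  by (simp_all add: perm_corolla_def)

lemma half_edges_corolla: "half_edges (corolla d) = {0} \<times> {..<d}"
  by (auto simp: half_edges_def corolla_def)

lemma num_leaves_corolla [simp]: "num_leaves (corolla d) = d"
proof -
  have "leaf_halfedges (corolla d) = {0} \<times> {..<d}"
    by (auto simp: leaf_halfedges_def half_edges_def corolla_def)
  then show ?thesis by (simp add: num_leaves_def card_cartesian_product)
qed

lemma num_leaves_perm_corolla [simp]: "num_leaves (perm_corolla s d) = d"
  by (simp add: perm_corolla_eq_relabel)

lemma wf_og_corolla: "wf_og (corolla d)"
proof (rule wf_ogI)
  show "{k. \<exists>h \<in> half_edges (corolla d). hend_at (corolla d) h = Lf k} = {..<num_leaves (corolla d)}"
    by (auto simp: half_edges_corolla corolla_nth)
qed (auto simp: corolla_def)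

lemma cyc_tree_corolla: "1 \<le> d \<Longrightarrow> cyc_tree (corolla d)"
proof -
  have "edge_halfedges (corolla d) = {}" by (auto simp: edge_halfedges_def half_edges_def corolla_def)
  then show "1 \<le> d \<Longrightarrow> cyc_tree (corolla d)"
    unfolding cyc_tree_def is_tree_def og_connected_def num_edges_def by (simp add: wf_og_corolla)
qed

lemma leaf_at_corolla: "m < d \<Longrightarrow> leaf_at (corolla d) m = (0, m)"
  by (rule leaf_at_eqI[OF wf_og_corolla]) (simp_all add: corolla_def)

lemma cyc_tree_perm_corolla: "1 \<le> d \<Longrightarrow> bij_betw s {..<d} {..<d} \<Longrightarrow> cyc_tree (perm_corolla s d)"
  unfolding perm_corolla_eq_relabel by (rule cyc_tree_relabel_leaves[OF cyc_tree_corolla]) simp_all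

lemma leaf_at_perm_corolla:
  assumes "bij_betw s {..<d} {..<d}" "m < d"
  shows "leaf_at (perm_corolla s d) (s m) = (0, m)"
  unfolding perm_corolla_eq_relabel
  using leaf_at_relabel_leaves[OF wf_og_corolla[of d], of s m] assms leaf_at_corolla by simp

lemma rooted_corolla: "1 \<le> d \<Longrightarrow> rooted (corolla d)"
  unfolding rooted_iff using cyc_tree_corolla by (simp add: corolla_def)

lemma length_subst [simp]: "length (subst p qs \<sigma>) = length \<sigma>"
  by (simp add: subst_def)

lemma subst_nth:
  "x < length \<sigma> \<Longrightarrow> subst p qs \<sigma> ! x = map (tr_hend p qs \<sigma> (\<sigma> ! x)) (qs ! (\<sigma> ! x) ! rank \<sigma> x)"
  by (simp add: subst_def)

lemma tr_hend_Ed [simp]: "tr_hend p qs \<sigma> l (Ed w j) = Ed (pos \<sigma> l w) j"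
  by (simp add: tr_hend_def)

lemma tr_hend_Lf_Lf: "p ! l ! i = Lf k \<Longrightarrow> tr_hend p qs \<sigma> l (Lf i) = Lf k"
  by (simp add: tr_hend_def)

lemma tr_hend_Lf_Ed: "p ! l ! i = Ed l' i' \<Longrightarrow>
   tr_hend p qs \<sigma> l (Lf i) = Ed (pos \<sigma> l' (fst (leaf_at (qs ! l') i'))) (snd (leaf_at (qs ! l') i'))"
  by (simp add: tr_hend_def)

lemma subst_perm_corollas:
  assumes wf: "wf_og X" and P: "ports_perm f g X"
  shows "subst X (map (\<lambda>v. perm_corolla (f v) (length (X ! v))) [0..<length X]) [0..<length X]
       = permute_ports f g X"
    (is "subst X ?qs ?\<sigma> = _")
proof (rule nth_equalityI)
  fix x assume "x < length (subst X ?qs ?\<sigma>)"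
  then have x: "x < length X" by simp
  show "subst X ?qs ?\<sigma> ! x = permute_ports f g X ! x"
  proof (rule nth_equalityI)
    fix i assume "i < length (subst X ?qs ?\<sigma> ! x)"
    then have i: "i < length (X ! x)" using x by (simp add: subst_nth rank_upt)
    have lhs: "subst X ?qs ?\<sigma> ! x ! i = tr_hend X ?qs ?\<sigma> x (Lf (f x i))"
      using x i by (simp add: subst_nth rank_upt perm_corolla_nth)
    show "subst X ?qs ?\<sigma> ! x ! i = permute_ports f g X ! x ! i"
    proof (cases "X ! x ! f x i")
      case (Lf k)
      then show ?thesis using lhs x i tr_hend_Lf_Lf[OF Lf] by (simp add: permute_ports_nth)
    next
      case (Ed l' i')
      have l': "l' < length X" "i' < length (X ! l')"
        using wf_og_partner[OF wf x ports_permD(1)[OF P x i] Ed] by blast+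
      have "leaf_at (perm_corolla (f l') (length (X ! l'))) (f l' (g l' i')) = (0, g l' i')"
        using leaf_at_perm_corolla[OF bij_betw_ports_perm[OF P l'(1)] ports_permD(2)[OF P l']] .
      then have "leaf_at (?qs ! l') i' = (0, g l' i')" using ports_permD(3)[OF P l'] l'(1) by simp
      then show ?thesis using lhs x i Ed tr_hend_Lf_Ed[OF Ed] pos_upt[OF l'(1)]
        by (simp add: permute_ports_nth)
    qed
  qed (use x in \<open>simp add: subst_nth rank_upt\<close>)
qed simp

lemma subst_corollas:
  "wf_og X \<Longrightarrow> subst X (map (\<lambda>v. corolla (length (X ! v))) [0..<length X]) [0..<length X] = X"
  using subst_perm_corollas[OF _ ports_perm_id] unfolding permute_ports_id corolla_eq_perm_corolla .

lemma subst_into_perm_corolla: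
  assumes wf: "wf_og T" and d: "num_leaves T \<le> d"
  shows "subst (perm_corolla s d) [T] (replicate (length T) 0) = relabel_leaves s T"
    (is "subst _ _ ?\<sigma> = _")
proof (rule nth_equalityI)
  fix x assume "x < length (subst (perm_corolla s d) [T] ?\<sigma>)"
  then have x: "x < length T" by simp
  show "subst (perm_corolla s d) [T] ?\<sigma> ! x = relabel_leaves s T ! x"
  proof (rule nth_equalityI)
    fix i assume "i < length (subst (perm_corolla s d) [T] ?\<sigma> ! x)"
    then have i: "i < length (T ! x)" using x by (simp add: subst_nth rank_replicate_0)
    have lhs: "subst (perm_corolla s d) [T] ?\<sigma> ! x ! i = tr_hend (perm_corolla s d) [T] ?\<sigma> 0 (T ! x ! i)"
      using x i by (simp add: subst_nth rank_replicate_0)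
    show "subst (perm_corolla s d) [T] ?\<sigma> ! x ! i = relabel_leaves s T ! x ! i"
    proof (cases "T ! x ! i")
      case (Lf m)
      have "m < d" using wf_og_leaf_label_lt[OF wf x i Lf] d by simp
      then show ?thesis using lhs x i Lf tr_hend_Lf_Lf perm_corolla_nth relabel_leaves_nth by simp
    next
      case (Ed w j)
      have "w < length T" using wf_og_partner[OF wf x i Ed] by blast
      then show ?thesis using lhs x i Ed pos_replicate_0 relabel_leaves_nth by simp
    qed
  qed (use x in \<open>simp add: subst_nth rank_replicate_0\<close>)
qed simp

section \<open>Rerooting\<close>

definition reroot :: "og \<Rightarrow> og" where
  "reroot G = permute_ports (\<lambda>v. front_perm (leaf_port G 0 v)) (\<lambda>v. front_perm_inv (leaf_port G 0 v)) G"

lemma ports_perm_reroot: "ports_perm (\<lambda>v. front_perm (leaf_port G 0 v)) (\<lambda>v. front_perm_inv (leaf_port G 0 v)) G"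
  unfolding ports_perm_def using leaf_port_lt_length front_perm_lt front_perm_inv_lt by simp

lemma length_reroot [simp]: "length (reroot G) = length G"
  and length_reroot_nth [simp]: "v < length G \<Longrightarrow> length (reroot G ! v) = length (G ! v)"
  by (simp_all add: reroot_def)

lemma reroot_nth: "v < length G \<Longrightarrow> i < length (G ! v) \<Longrightarrow>
    reroot G ! v ! i = port_rename (\<lambda>w. front_perm_inv (leaf_port G 0 w)) (G ! v ! front_perm (leaf_port G 0 v) i)"
  unfolding reroot_def by (rule permute_ports_nth)

lemma reroot_nth_front_perm_inv: "v < length G \<Longrightarrow> m < length (G ! v) \<Longrightarrow>
    reroot G ! v ! front_perm_inv (leaf_port G 0 v) m = port_rename (\<lambda>w. front_perm_inv (leaf_port G 0 w)) (G ! v ! m)"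
  unfolding reroot_def by (rule permute_ports_at_inverse[OF ports_perm_reroot])

lemma cyc_tree_reroot: "cyc_tree G \<Longrightarrow> cyc_tree (reroot G)"
  unfolding reroot_def by (rule cyc_tree_permute_ports[OF ports_perm_reroot])

lemma rooted_reroot:
  assumes T: "cyc_tree G"
  shows "rooted (reroot G)"
  unfolding rooted_iff_toward_leaf
proof (intro conjI allI impI)
  fix v assume "v < length (reroot G)"
  then have v: "v < length G" by simp
  note tree = cyc_treeD(1)[OF T] and wf = cyc_treeD(2)[OF T] and leaves = cyc_treeD(3)[OF T]
  let ?\<delta> = "leaf_port G 0 v"
  have toward: "toward_leaf G 0 v ?\<delta>" by (rule toward_leaf_leaf_port[OF tree v leaves])
  then have pos: "0 < length (G ! v)" unfolding toward_leaf_def by linarith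
  have "reroot G ! v ! 0 = port_rename (\<lambda>w. front_perm_inv (leaf_port G 0 w)) (G ! v ! ?\<delta>)"
    using reroot_nth[OF v pos] by (simp add: front_perm_def)
  moreover have "adj_avoid (reroot G) v = adj_avoid G v"
    unfolding reroot_def by (rule adj_avoid_permute_ports[OF ports_perm_reroot])
  moreover have "fst (leaf_at (reroot G) 0) = fst (leaf_at G 0)"
    unfolding reroot_def using leaf_at_permute_ports[OF ports_perm_reroot wf leaves] by simp
  ultimately show "toward_leaf (reroot G) 0 v 0"
    using toward pos v unfolding toward_leaf_def by (cases "G ! v ! ?\<delta>") auto
qed (rule cyc_tree_reroot[OF T])

lemma leaf_port_rooted:
  assumes R: "rooted G" and v: "v < length G"
  shows "leaf_port G 0 v = 0"
proof -
  have T: "cyc_tree G" and "toward_leaf G 0 v 0" using R v unfolding rooted_iff_toward_leaf by blast+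
  then show ?thesis using leaf_port_eqI[OF cyc_treeD(1)[OF T] v cyc_treeD(3)[OF T]] by blast
qed

lemma reroot_rooted:
  assumes R: "rooted G"
  shows "reroot G = G"
proof (rule nth_equalityI)
  fix v assume "v < length (reroot G)"
  then have v: "v < length G" by simp
  have wf: "wf_og G" using cyc_treeD(2) rooted_imp_cyc_tree[OF R] .
  show "reroot G ! v = G ! v"
  proof (rule nth_equalityI)
    fix i assume "i < length (reroot G ! v)"
    then have i: "i < length (G ! v)" using v by simp
    show "reroot G ! v ! i = G ! v ! i"
    proof (cases "G ! v ! i")
      case (Ed w j)
      then have "w < length G" using wf_og_partner[OF wf v i] by blast
      then show ?thesis using reroot_nth[OF v i] Ed leaf_port_rooted[OF R] v by simp
    qed (use reroot_nth[OF v i] leaf_port_rooted[OF R v] in simp)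
  qed (use v in simp)
qed simp

lemma toward_leaf_relabel_leaves:
  assumes wf: "wf_og G" and s: "bij_betw s {..<num_leaves G} {..<num_leaves G}" and k: "k < num_leaves G"
    and v: "v < length G"
  shows "toward_leaf (relabel_leaves s G) (s k) v i \<longleftrightarrow> toward_leaf G k v i"
proof (cases "i < length (G ! v)")
  case True
  have "relabel_leaves s G ! v ! i = Lf (s k) \<longleftrightarrow> G ! v ! i = Lf k"
  proof
    assume "relabel_leaves s G ! v ! i = Lf (s k)"
    then obtain m where m: "G ! v ! i = Lf m" "s k = s m" using relabel_leaves_Lf_iff[OF v True] by blast
    then have "m < num_leaves G" using wf_og_leaf_label_lt[OF wf v True] by blast
    then show "G ! v ! i = Lf k" using m k s unfolding bij_betw_def inj_on_def by auto
  qed (simp add: relabel_leaves_nth[OF v True])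
  then show ?thesis unfolding toward_leaf_def
    using relabel_leaves_Ed_iff[OF v True] leaf_at_relabel_leaves[OF wf s k] v by simp
qed (simp add: toward_leaf_def v)

lemma leaf_port_relabel_leaves:
  assumes "wf_og G" "bij_betw s {..<num_leaves G} {..<num_leaves G}" "k < num_leaves G" "v < length G"
  shows "leaf_port (relabel_leaves s G) (s k) v = leaf_port G k v"
proof -
  have "toward_leaf (relabel_leaves s G) (s k) v = toward_leaf G k v"
    using toward_leaf_relabel_leaves[OF assms] by blast
  then show ?thesis unfolding leaf_port_def by (simp only:)
qed

definition reroot_inserts :: "og \<Rightarrow> og list \<Rightarrow> og list" where
  "reroot_inserts p qs = map (\<lambda>l. reroot (relabel_leaves (front_perm_inv (leaf_port p 0 l)) (qs ! l))) [0..<length p]"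

section \<open>The root-ward port of a substituted vertex\<close>

text \<open>The data of a morphism out of p whose target is q = subst p qs \<sigma>
  (cf. valid_subst_iff).\<close>

locale subst_tree =
  fixes p :: og and qs :: "og list" and \<sigma> :: "nat list"
  assumes cyc_tree_p: "cyc_tree p"
    and length_qs: "length qs = length p"
    and cyc_tree_qs: "\<And>l. l < length p \<Longrightarrow> cyc_tree (qs ! l)"
    and leaves_qs: "\<And>l. l < length p \<Longrightarrow> num_leaves (qs ! l) = length (p ! l)"
    and set_assign: "set \<sigma> \<subseteq> {..<length p}"
    and length_fiber_qs: "\<And>l. l < length p \<Longrightarrow> length (fiber \<sigma> l) = length (qs ! l)"
begin

abbreviation "q \<equiv> subst p qs \<sigma>"

abbreviation block_adj :: "nat \<Rightarrow> nat \<Rightarrow> (nat \<times> nat) set" where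
  "block_adj m x0 \<equiv> {(a, b). pos \<sigma> m a \<noteq> x0 \<and> pos \<sigma> m b \<noteq> x0 \<and> adj (qs ! m) a b}"

lemma wf_p: "wf_og p" and tree_p: "is_tree p" and leaves_p: "0 < num_leaves p"
  using cyc_treeD[OF cyc_tree_p] by simp_all

lemma wf_qs: "l < length p \<Longrightarrow> wf_og (qs ! l)" and tree_qs: "l < length p \<Longrightarrow> is_tree (qs ! l)"
  using cyc_treeD[OF cyc_tree_qs] by simp_all

lemma conn_qs: "l < length p \<Longrightarrow> og_connected (qs ! l)"
  using tree_qs unfolding is_tree_def by blast

lemma assign_lt: "x < length \<sigma> \<Longrightarrow> \<sigma> ! x < length p"
  using set_assign nth_mem by blast

lemma rank_lt_qs: "x < length \<sigma> \<Longrightarrow> rank \<sigma> x < length (qs ! (\<sigma> ! x))"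
  using rank_lt[of x \<sigma>] length_fiber_qs[OF assign_lt] by simp

lemma pos_qs:
  assumes "l < length p" "r < length (qs ! l)"
  shows "pos \<sigma> l r < length \<sigma>" "\<sigma> ! pos \<sigma> l r = l" "rank \<sigma> (pos \<sigma> l r) = r"
  using pos_spec[of r \<sigma> l] length_fiber_qs[OF assms(1)] assms(2) by simp_all

lemma length_q_nth: "x < length \<sigma> \<Longrightarrow> length (q ! x) = length (qs ! (\<sigma> ! x) ! rank \<sigma> x)"
  by (simp add: subst_nth)

lemma q_nth_nth: "x < length \<sigma> \<Longrightarrow> i < length (q ! x) \<Longrightarrow> q ! x ! i = tr_hend p qs \<sigma> (\<sigma> ! x) (qs ! (\<sigma> ! x) ! rank \<sigma> x ! i)"
  by (simp add: subst_nth)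

lemma leaf_at_qs:
  assumes "l < length p" "m < length (p ! l)"
  shows "fst (leaf_at (qs ! l) m) < length (qs ! l)" "snd (leaf_at (qs ! l) m) < length (qs ! l ! fst (leaf_at (qs ! l) m))"
    "qs ! l ! fst (leaf_at (qs ! l) m) ! snd (leaf_at (qs ! l) m) = Lf m"
  using leaf_at_spec[OF wf_qs[OF assms(1)]] leaves_qs[OF assms(1)] assms(2) by simp_all

lemma leaf_label_qs_lt:
  assumes "l < length p" "r < length (qs ! l)" "c < length (qs ! l ! r)" "qs ! l ! r ! c = Lf m"
  shows "m < length (p ! l)"
  using wf_og_leaf_label_lt[OF wf_qs[OF assms(1)] assms(2-4)] leaves_qs[OF assms(1)] by simp

lemma partner_qs_lt:
  assumes "l < length p" "r < length (qs ! l)" "c < length (qs ! l ! r)" "qs ! l ! r ! c = Ed w j"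
  shows "w < length (qs ! l)" "j < length (qs ! l ! w)"
  using wf_og_partner[OF wf_qs[OF assms(1)] assms(2-4)] by blast+

lemma q_nth_Ed:
  assumes x: "x < length \<sigma>" and i: "i < length (qs ! (\<sigma> ! x) ! rank \<sigma> x)"
    and e: "qs ! (\<sigma> ! x) ! rank \<sigma> x ! i = Ed w j"
  shows "q ! x ! i = Ed (pos \<sigma> (\<sigma> ! x) w) j"
  using q_nth_nth[OF x] i e length_q_nth[OF x] by simp

lemma q_nth_Lf_Lf:
  assumes x: "x < length \<sigma>" and i: "i < length (qs ! (\<sigma> ! x) ! rank \<sigma> x)"
    and e: "qs ! (\<sigma> ! x) ! rank \<sigma> x ! i = Lf m" and e2: "p ! (\<sigma> ! x) ! m = Lf k"
  shows "q ! x ! i = Lf k"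
  using q_nth_nth[OF x] i e length_q_nth[OF x] tr_hend_Lf_Lf[OF e2] by simp

lemma q_nth_Lf_Ed:
  assumes x: "x < length \<sigma>" and i: "i < length (qs ! (\<sigma> ! x) ! rank \<sigma> x)"
    and e: "qs ! (\<sigma> ! x) ! rank \<sigma> x ! i = Lf m" and e2: "p ! (\<sigma> ! x) ! m = Ed l' i'"
  shows "q ! x ! i = Ed (pos \<sigma> l' (fst (leaf_at (qs ! l') i'))) (snd (leaf_at (qs ! l') i'))"
  using q_nth_nth[OF x] i e length_q_nth[OF x] tr_hend_Lf_Ed[OF e2] by simp

lemma adj_q_cases:
  assumes "adj q z z'"
  shows "z < length \<sigma> \<and> z' < length \<sigma> \<and>
     ((\<sigma> ! z' = \<sigma> ! z \<and> adj (qs ! (\<sigma> ! z)) (rank \<sigma> z) (rank \<sigma> z')) \<or>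
      (\<exists>m c m' b. c < length (qs ! (\<sigma> ! z) ! rank \<sigma> z) \<and> qs ! (\<sigma> ! z) ! rank \<sigma> z ! c = Lf m
         \<and> m < length (p ! (\<sigma> ! z)) \<and> p ! (\<sigma> ! z) ! m = Ed (\<sigma> ! z') m'
         \<and> b < length (qs ! (\<sigma> ! z') ! rank \<sigma> z') \<and> qs ! (\<sigma> ! z') ! rank \<sigma> z' ! b = Lf m'))"
proof -
  obtain c e where ce: "z < length q" "c < length (q ! z)" "q ! z ! c = Ed z' e"
    using assms unfolding adj_iff by blast
  have z: "z < length \<sigma>" using ce(1) by simp
  let ?l = "\<sigma> ! z" and ?r = "rank \<sigma> z"
  have l: "?l < length p" and r: "?r < length (qs ! ?l)" using assign_lt[OF z] rank_lt_qs[OF z] .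
  have c: "c < length (qs ! ?l ! ?r)" using ce(2) length_q_nth[OF z] by simp
  have qe: "q ! z ! c = tr_hend p qs \<sigma> ?l (qs ! ?l ! ?r ! c)" using q_nth_nth[OF z ce(2)] .
  show ?thesis
  proof (cases "qs ! ?l ! ?r ! c")
    case (Ed w j)
    have w: "w < length (qs ! ?l)" using partner_qs_lt[OF l r c Ed] by simp
    have z': "z' = pos \<sigma> ?l w" using qe ce(3) Ed by simp
    note pp = pos_qs[OF l w]
    have "adj (qs ! ?l) ?r w" unfolding adj_iff using r c Ed by blast
    then show ?thesis using z z' pp by simp
  next
    case (Lf m)
    have m: "m < length (p ! ?l)" using leaf_label_qs_lt[OF l r c Lf] .
    show ?thesis
    proof (cases "p ! ?l ! m")
      case (Lf k)
      then show ?thesis using qe ce(3) \<open>qs ! ?l ! ?r ! c = Lf m\<close> tr_hend_Lf_Lf by simp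
    next
      case (Ed l2 m')
      have pw: "l2 < length p" "m' < length (p ! l2)" using wf_og_partner[OF wf_p l m Ed] by blast+
      note lp = leaf_at_qs[OF pw]
      have z': "z' = pos \<sigma> l2 (fst (leaf_at (qs ! l2) m'))"
        using qe ce(3) \<open>qs ! ?l ! ?r ! c = Lf m\<close> tr_hend_Lf_Ed[OF Ed] by simp
      note pp = pos_qs[OF pw(1) lp(1)]
      show ?thesis using z z' pp lp c \<open>qs ! ?l ! ?r ! c = Lf m\<close> m Ed
        by (intro conjI disjI2 exI[of _ m] exI[of _ c] exI[of _ m'] exI[of _ "snd (leaf_at (qs ! l2) m')"]) simp_all
    qed
  qed
qed

definition "root_p = fst (leaf_at p 0)"
definition "root_port_p = snd (leaf_at p 0)"
definition "root_qs = fst (leaf_at (qs ! root_p) root_port_p)"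
definition "root_port_qs = snd (leaf_at (qs ! root_p) root_port_p)"
definition "root_q = pos \<sigma> root_p root_qs"

lemma root_p_spec: "root_p < length p" "root_port_p < length (p ! root_p)" "p ! root_p ! root_port_p = Lf 0"
  using leaf_at_spec[OF wf_p leaves_p] unfolding root_p_def root_port_p_def by simp_all

lemma root_qs_spec: "root_qs < length (qs ! root_p)" "root_port_qs < length (qs ! root_p ! root_qs)" "qs ! root_p ! root_qs ! root_port_qs = Lf root_port_p"
  using leaf_at_qs[OF root_p_spec(1,2)] unfolding root_qs_def root_port_qs_def by simp_all

lemma root_q_spec: "root_q < length \<sigma>" "\<sigma> ! root_q = root_p" "rank \<sigma> root_q = root_qs"
  using pos_qs[OF root_p_spec(1) root_qs_spec(1)] unfolding root_q_def by simp_all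

lemma leaf_at_q_0: "leaf_at q 0 = (root_q, root_port_qs)"
  unfolding leaf_at_def
proof (rule the_equality)
  have "q ! root_q ! root_port_qs = Lf 0"
    using q_nth_Lf_Lf[OF root_q_spec(1), of root_port_qs root_port_p 0] root_q_spec root_qs_spec root_p_spec by simp
  then show "(root_q, root_port_qs) \<in> half_edges q \<and> hend_at q (root_q, root_port_qs) = Lf 0"
    using root_q_spec root_qs_spec length_q_nth[OF root_q_spec(1)] by simp
next
  fix h assume h: "h \<in> half_edges q \<and> hend_at q h = Lf 0"
  obtain x i where hx: "h = (x, i)" by (cases h)
  have x: "x < length \<sigma>" "i < length (q ! x)" "q ! x ! i = Lf 0" using h hx by simp_all
  let ?l = "\<sigma> ! x" and ?r = "rank \<sigma> x"
  have l: "?l < length p" and r: "?r < length (qs ! ?l)" using assign_lt[OF x(1)] rank_lt_qs[OF x(1)] .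
  have i: "i < length (qs ! ?l ! ?r)" using x(2) length_q_nth[OF x(1)] by simp
  show "h = (root_q, root_port_qs)"
  proof (cases "qs ! ?l ! ?r ! i")
    case (Ed w j)
    then show ?thesis using q_nth_Ed[OF x(1) i Ed] x(3) by simp
  next
    case (Lf m)
    have m: "m < length (p ! ?l)" using leaf_label_qs_lt[OF l r i Lf] .
    show ?thesis
    proof (cases "p ! ?l ! m")
      case (Ed l' i')
      then show ?thesis using q_nth_Lf_Ed[OF x(1) i Lf Ed] x(3) by simp
    next
      case (Lf k)
      then have k: "k = 0" using q_nth_Lf_Lf[OF x(1) i \<open>qs ! ?l ! ?r ! i = Lf m\<close> Lf] x(3) by simp
      have e1: "root_p = ?l \<and> root_port_p = m" using wf_og_leaf_unique[OF wf_p l m Lf[unfolded k] root_p_spec] .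
      have e2: "root_qs = ?r \<and> root_port_qs = i"
        using wf_og_leaf_unique[OF wf_qs[OF l] r i \<open>qs ! ?l ! ?r ! i = Lf m\<close>] root_qs_spec e1 by simp
      have "x = root_q" unfolding root_q_def using e1 e2 pos_rank[OF x(1)] by simp
      then show ?thesis using hx e2 by simp
    qed
  qed
qed

lemma inner_path_lifts:
  assumes m: "m < length p" and path: "(u, u') \<in> (block_adj m x0)\<^sup>*"
  shows "(pos \<sigma> m u, pos \<sigma> m u') \<in> (adj_avoid q x0)\<^sup>*"
  using path
proof (induction rule: rtrancl_induct)
  case base then show ?case by simp
next
  case (step b c)
  then have bc: "pos \<sigma> m b \<noteq> x0" "pos \<sigma> m c \<noteq> x0" "adj (qs ! m) b c" by simp_all
  obtain i j where ij: "b < length (qs ! m)" "i < length (qs ! m ! b)" "qs ! m ! b ! i = Ed c j"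
    using bc(3) unfolding adj_iff by blast
  note pp = pos_qs[OF m ij(1)]
  have "q ! pos \<sigma> m b ! i = Ed (pos \<sigma> m c) j"
    using q_nth_Ed[OF pp(1), of i c j] pp ij by simp
  moreover have "pos \<sigma> m b < length q" "i < length (q ! pos \<sigma> m b)"
    using pp ij length_q_nth[OF pp(1)] by simp_all
  ultimately have "adj q (pos \<sigma> m b) (pos \<sigma> m c)" unfolding adj_iff by blast
  then have "(pos \<sigma> m b, pos \<sigma> m c) \<in> adj_avoid q x0" using bc unfolding adj_avoid_def by simp
  from step.IH this show ?case by (rule rtrancl_into_rtrancl)
qed

lemma inner_path_lifts_other:
  assumes m: "m < length p" and mx: "m \<noteq> \<sigma> ! x0" and u: "u < length (qs ! m)" "u' < length (qs ! m)"
  shows "(pos \<sigma> m u, pos \<sigma> m u') \<in> (adj_avoid q x0)\<^sup>*"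
proof -
  have "(u, u') \<in> {(a, b). adj (qs ! m) a b}\<^sup>*" using conn_qs[OF m] u unfolding og_connected_def by blast
  moreover have "{(a, b). adj (qs ! m) a b} \<subseteq> block_adj m x0"
  proof (rule subsetI)
    fix pr assume "pr \<in> {(a, b). adj (qs ! m) a b}"
    then obtain a b where pr: "pr = (a, b)" and ab: "adj (qs ! m) a b" by blast
    have "a < length (qs ! m)" "b < length (qs ! m)" using adj_lt_length[OF wf_qs[OF m] ab] by simp_all
    then have "\<sigma> ! pos \<sigma> m a = m" "\<sigma> ! pos \<sigma> m b = m" using pos_qs[OF m] by simp_all
    then have "pos \<sigma> m a \<noteq> x0" "pos \<sigma> m b \<noteq> x0" using mx by auto
    then show "pr \<in> block_adj m x0"
      using pr ab by simp
  qed
  ultimately have "(u, u') \<in> (block_adj m x0)\<^sup>*"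
    using rtrancl_mono by blast
  then show ?thesis by (rule inner_path_lifts[OF m])
qed

lemma outer_path_lifts:
  assumes x0: "x0 < length \<sigma>" and path: "(a, b) \<in> (adj_avoid p (\<sigma> ! x0))\<^sup>*" and a: "a < length p" "a \<noteq> \<sigma> ! x0"
    and u: "u < length (qs ! a)"
  shows "u' < length (qs ! b) \<Longrightarrow> (pos \<sigma> a u, pos \<sigma> b u') \<in> (adj_avoid q x0)\<^sup>*"
  using path
proof (induction arbitrary: u' rule: rtrancl_induct)
  case base
  then show ?case using inner_path_lifts_other[OF a(1) a(2) u] by simp
next
  case (step b c)
  have bc: "b \<noteq> \<sigma> ! x0" "c \<noteq> \<sigma> ! x0" "adj p b c" using step.hyps(2) unfolding adj_avoid_def by simp_all
  obtain mm m' where mm: "b < length p" "mm < length (p ! b)" "p ! b ! mm = Ed c m'"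
    using bc(3) unfolding adj_iff by blast
  have pw: "c < length p" "m' < length (p ! c)" using wf_og_partner[OF wf_p mm] by blast+
  note l1 = leaf_at_qs[OF mm(1,2)]
  note l2 = leaf_at_qs[OF pw]
  let ?u1 = "fst (leaf_at (qs ! b) mm)" and ?c1 = "snd (leaf_at (qs ! b) mm)"
  let ?u2 = "fst (leaf_at (qs ! c) m')"
  note pp1 = pos_qs[OF mm(1) l1(1)]
  note pp2 = pos_qs[OF pw(1) l2(1)]
  have "q ! pos \<sigma> b ?u1 ! ?c1 = Ed (pos \<sigma> c ?u2) (snd (leaf_at (qs ! c) m'))"
    using q_nth_Lf_Ed[OF pp1(1), of ?c1 mm c m'] pp1 l1 mm(3) by simp
  moreover have "pos \<sigma> b ?u1 < length q" "?c1 < length (q ! pos \<sigma> b ?u1)"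
    using pp1 l1 length_q_nth[OF pp1(1)] by simp_all
  ultimately have "adj q (pos \<sigma> b ?u1) (pos \<sigma> c ?u2)" unfolding adj_iff by blast
  moreover have "pos \<sigma> b ?u1 \<noteq> x0" "pos \<sigma> c ?u2 \<noteq> x0" using pp1 pp2 bc by auto
  ultimately have st: "(pos \<sigma> b ?u1, pos \<sigma> c ?u2) \<in> adj_avoid q x0" unfolding adj_avoid_def by simp
  have "(pos \<sigma> a u, pos \<sigma> b ?u1) \<in> (adj_avoid q x0)\<^sup>*" using step.IH l1(1) by simp
  from rtrancl_into_rtrancl[OF this st]
  have "(pos \<sigma> a u, pos \<sigma> c ?u2) \<in> (adj_avoid q x0)\<^sup>*" .
  moreover have "(pos \<sigma> c ?u2, pos \<sigma> c u') \<in> (adj_avoid q x0)\<^sup>*" using inner_path_lifts_other[OF pw(1) bc(2) l2(1) step.prems] .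
  ultimately show ?case by (rule rtrancl_trans)
qed

lemma leaf_port_p_spec:
  assumes l: "l < length p"
  shows "toward_leaf p 0 l (leaf_port p 0 l)" "leaf_port p 0 l < length (p ! l)"
    "\<And>i. toward_leaf p 0 l i \<Longrightarrow> i = leaf_port p 0 l"
proof -
  show "toward_leaf p 0 l (leaf_port p 0 l)" by (rule toward_leaf_leaf_port[OF tree_p l leaves_p])
  show "leaf_port p 0 l < length (p ! l)" by (rule leaf_port_lt[OF tree_p l leaves_p])
  show "i = leaf_port p 0 l" if "toward_leaf p 0 l i" for i
    using leaf_port_eqI[OF tree_p l leaves_p that] by simp
qed

lemma adj_avoid_qs_lifts:
  assumes x0: "x0 < length \<sigma>"
  shows "(adj_avoid (qs ! (\<sigma> ! x0)) (rank \<sigma> x0))\<^sup>* \<subseteq>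
    (block_adj (\<sigma> ! x0) x0)\<^sup>*"
proof (rule rtrancl_mono, rule subsetI)
  let ?l = "\<sigma> ! x0"
  have l: "?l < length p" using assign_lt[OF x0] .
  fix e assume "e \<in> adj_avoid (qs ! ?l) (rank \<sigma> x0)"
  then obtain a b where e: "e = (a, b)" and ab: "a \<noteq> rank \<sigma> x0" "b \<noteq> rank \<sigma> x0" "adj (qs ! ?l) a b"
    unfolding adj_avoid_def by blast
  have "a < length (qs ! ?l)" "b < length (qs ! ?l)" using adj_lt_length[OF wf_qs[OF l] ab(3)] by simp_all
  then have "rank \<sigma> (pos \<sigma> ?l a) = a" "rank \<sigma> (pos \<sigma> ?l b) = b" using pos_qs[OF l] by simp_all
  then have "pos \<sigma> ?l a \<noteq> x0" "pos \<sigma> ?l b \<noteq> x0" using ab by auto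
  then show "e \<in> block_adj ?l x0"
    using e ab(3) by simp
qed

text \<open>The block of q substituted for vertex l of p is left toward the root of q at the
  leaf of qs ! l that matches the root-ward port of l in p.\<close>

definition exit_vertex :: "nat \<Rightarrow> nat" where
  "exit_vertex x = pos \<sigma> (\<sigma> ! x) (fst (leaf_at (qs ! (\<sigma> ! x)) (leaf_port p 0 (\<sigma> ! x))))"

definition exit_port :: "nat \<Rightarrow> nat" where
  "exit_port x = snd (leaf_at (qs ! (\<sigma> ! x)) (leaf_port p 0 (\<sigma> ! x)))"

lemma exit_spec:
  assumes x: "x < length \<sigma>"
  shows "exit_vertex x < length \<sigma>" "\<sigma> ! exit_vertex x = \<sigma> ! x"
    "rank \<sigma> (exit_vertex x) = fst (leaf_at (qs ! (\<sigma> ! x)) (leaf_port p 0 (\<sigma> ! x)))"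
    "exit_port x < length (qs ! (\<sigma> ! exit_vertex x) ! rank \<sigma> (exit_vertex x))"
    "qs ! (\<sigma> ! exit_vertex x) ! rank \<sigma> (exit_vertex x) ! exit_port x = Lf (leaf_port p 0 (\<sigma> ! x))"
  using leaf_at_qs[OF assign_lt[OF x] leaf_port_p_spec(2)[OF assign_lt[OF x]]]
    pos_qs[OF assign_lt[OF x]] unfolding exit_vertex_def exit_port_def by simp_all

lemma exit_toward_root:
  assumes x0: "x0 < length \<sigma>"
  shows "(q ! exit_vertex x0 ! exit_port x0 = Lf 0 \<and> exit_vertex x0 = root_q)
    \<or> (\<exists>z e. q ! exit_vertex x0 ! exit_port x0 = Ed z e \<and> z \<noteq> x0 \<and> (z, root_q) \<in> (adj_avoid q x0)\<^sup>*)"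
proof -
  let ?l = "\<sigma> ! x0" and ?\<rho> = "leaf_port p 0 (\<sigma> ! x0)"
  have l: "?l < length p" using assign_lt[OF x0] .
  note \<rho> = leaf_port_p_spec[OF l] and exit = exit_spec[OF x0]
  show ?thesis
  proof (cases "p ! ?l ! ?\<rho> = Lf 0")
    case True
    have "leaf_at p 0 = (?l, ?\<rho>)" using leaf_at_eqI[OF wf_p l \<rho>(2) True] .
    then have "exit_vertex x0 = root_q"
      unfolding root_q_def root_qs_def root_p_def root_port_p_def exit_vertex_def by simp
    moreover have "q ! exit_vertex x0 ! exit_port x0 = Lf 0"
      using q_nth_Lf_Lf[OF exit(1,4,5)] exit(2) True by simp
    ultimately show ?thesis by simp
  next
    case False
    then obtain l' i' where e: "p ! ?l ! ?\<rho> = Ed l' i'" "(l', root_p) \<in> (adj_avoid p ?l)\<^sup>*"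
      using \<rho>(1) unfolding toward_leaf_def root_p_def by blast
    have l': "l' < length p" "i' < length (p ! l')" using wf_og_partner[OF wf_p l \<rho>(2) e(1)] by blast+
    have "l' \<noteq> ?l" using tree_no_loop[OF tree_p l \<rho>(2) e(1)] .
    moreover have "q ! exit_vertex x0 ! exit_port x0
        = Ed (pos \<sigma> l' (fst (leaf_at (qs ! l') i'))) (snd (leaf_at (qs ! l') i'))"
      using q_nth_Lf_Ed[OF exit(1,4,5)] exit(2) e(1) by simp
    moreover have "(pos \<sigma> l' (fst (leaf_at (qs ! l') i')), root_q) \<in> (adj_avoid q x0)\<^sup>*"
      unfolding root_q_def
      using outer_path_lifts[OF x0 e(2) l'(1) calculation(1) leaf_at_qs(1)[OF l'] root_qs_spec(1)] .
    moreover have "pos \<sigma> l' (fst (leaf_at (qs ! l') i')) \<noteq> x0"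
      using pos_qs(2)[OF l'(1) leaf_at_qs(1)[OF l']] calculation(1) by auto
    ultimately show ?thesis by blast
  qed
qed

lemma root_reachable_via_exit:
  assumes x0: "x0 < length \<sigma>" and path: "(u, exit_vertex x0) \<in> (adj_avoid q x0)\<^sup>*" and ne: "exit_vertex x0 \<noteq> x0"
  shows "(u, root_q) \<in> (adj_avoid q x0)\<^sup>*"
  using exit_toward_root[OF x0]
proof
  assume "\<exists>z e. q ! exit_vertex x0 ! exit_port x0 = Ed z e \<and> z \<noteq> x0 \<and> (z, root_q) \<in> (adj_avoid q x0)\<^sup>*"
  then obtain z e where z: "q ! exit_vertex x0 ! exit_port x0 = Ed z e" "z \<noteq> x0" "(z, root_q) \<in> (adj_avoid q x0)\<^sup>*"
    by blast
  note exit = exit_spec[OF x0]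
  have "adj q (exit_vertex x0) z"
    unfolding adj_iff using z(1) exit(1,4) length_q_nth[OF exit(1)] by auto
  then have "(exit_vertex x0, z) \<in> adj_avoid q x0" using ne z(2) unfolding adj_avoid_def by simp
  then have "(exit_vertex x0, root_q) \<in> (adj_avoid q x0)\<^sup>*" using z(3) by (rule converse_rtrancl_into_rtrancl)
  then show ?thesis using path by (rule rtrancl_trans[rotated])
qed (use path in simp)

lemma toward_leaf_subst_if:
  assumes x0: "x0 < length \<sigma>"
    and toward: "toward_leaf (qs ! (\<sigma> ! x0)) (leaf_port p 0 (\<sigma> ! x0)) (rank \<sigma> x0) i"
  shows "toward_leaf q 0 x0 i"
proof -
  let ?l = "\<sigma> ! x0" and ?r = "rank \<sigma> x0" and ?\<rho> = "leaf_port p 0 (\<sigma> ! x0)"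
  have l: "?l < length p" and r: "?r < length (qs ! ?l)" using assign_lt[OF x0] rank_lt_qs[OF x0] .
  have i: "i < length (qs ! ?l ! ?r)" and iq: "i < length (q ! x0)"
    using toward length_q_nth[OF x0] unfolding toward_leaf_def by simp_all
  have root: "fst (leaf_at q 0) = root_q" using leaf_at_q_0 by simp
  show ?thesis
  proof (cases "qs ! ?l ! ?r ! i = Lf ?\<rho>")
    case True
    have "leaf_at (qs ! ?l) ?\<rho> = (?r, i)" using leaf_at_eqI[OF wf_qs[OF l] r i True] .
    then have "exit_vertex x0 = x0" "exit_port x0 = i" using pos_rank[OF x0] unfolding exit_vertex_def exit_port_def by simp_all
    then have "q ! x0 ! i = Lf 0 \<or> (\<exists>z e. q ! x0 ! i = Ed z e \<and> (z, root_q) \<in> (adj_avoid q x0)\<^sup>*)"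
      using exit_toward_root[OF x0] by auto
    then show ?thesis using iq root unfolding toward_leaf_def by simp
  next
    case False
    then obtain w j where w: "qs ! ?l ! ?r ! i = Ed w j"
      "(w, fst (leaf_at (qs ! ?l) ?\<rho>)) \<in> (adj_avoid (qs ! ?l) ?r)\<^sup>*"
      using toward unfolding toward_leaf_def by blast
    have "(w, fst (leaf_at (qs ! ?l) ?\<rho>))
        \<in> (block_adj ?l x0)\<^sup>*"
      using adj_avoid_qs_lifts[OF x0] w(2) by (rule subsetD)
    then have "(pos \<sigma> ?l w, exit_vertex x0) \<in> (adj_avoid q x0)\<^sup>*"
      unfolding exit_vertex_def by (rule inner_path_lifts[OF l])
    moreover have "exit_vertex x0 \<noteq> x0"
    proof
      assume "exit_vertex x0 = x0"
      then have "fst (leaf_at (qs ! ?l) ?\<rho>) = ?r" using exit_spec(3)[OF x0] by simp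
      then show False using adj_avoid_rtrancl_ne[OF w(2) tree_no_loop[OF tree_qs[OF l] r i w(1)]] by simp
    qed
    ultimately have "(pos \<sigma> ?l w, root_q) \<in> (adj_avoid q x0)\<^sup>*" by (rule root_reachable_via_exit[OF x0])
    then show ?thesis using q_nth_Ed[OF x0 i w(1)] iq root unfolding toward_leaf_def by simp
  qed
qed

definition port_reaches :: "nat \<Rightarrow> nat \<Rightarrow> nat \<Rightarrow> bool" where
  "port_reaches l m v \<longleftrightarrow> m < length (p ! l) \<and> (\<exists>w j. p ! l ! m = Ed w j \<and> (w, v) \<in> (adj_avoid p l)\<^sup>*)"

lemma port_reaches_unique:
  assumes l: "l < length p" and "port_reaches l m1 v" "port_reaches l m2 v"
  shows "m1 = m2"
proof -
  obtain w1 j1 w2 j2 where m: "m1 < length (p ! l)" "p ! l ! m1 = Ed w1 j1" "(w1, v) \<in> (adj_avoid p l)\<^sup>*"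
    "m2 < length (p ! l)" "p ! l ! m2 = Ed w2 j2" "(w2, v) \<in> (adj_avoid p l)\<^sup>*"
    using assms(2,3) unfolding port_reaches_def by blast
  have "(w1, w2) \<in> (adj_avoid p l)\<^sup>*" using m(3) adj_avoid_rtrancl_sym[OF wf_p m(6)] by (rule rtrancl_trans)
  then show ?thesis using tree_ports_separate[OF tree_p l m(1,4) _ m(2,5)] by blast
qed

lemma port_reaches_leaf_port:
  assumes l: "l < length p" and ne: "root_p \<noteq> l"
  shows "port_reaches l (leaf_port p 0 l) root_p"
proof -
  note \<rho> = leaf_port_p_spec[OF l]
  have "p ! l ! leaf_port p 0 l \<noteq> Lf 0"
  proof
    assume "p ! l ! leaf_port p 0 l = Lf 0"
    then have "leaf_at p 0 = (l, leaf_port p 0 l)" using leaf_at_eqI[OF wf_p l \<rho>(2)] by simp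
    then show False using ne unfolding root_p_def by simp
  qed
  then show ?thesis using \<rho>(1,2) unfolding port_reaches_def toward_leaf_def root_p_def by blast
qed

lemma root_port_p_eq_leaf_port: "root_port_p = leaf_port p 0 root_p"
proof -
  have "toward_leaf p 0 root_p root_port_p" unfolding toward_leaf_def using root_p_spec by simp
  then show ?thesis using leaf_port_p_spec(3)[OF root_p_spec(1)] by simp
qed

text \<open>A walk in q that avoids x0 stays in the part A of the block of x0 or in blocks of
  vertices of p reached from \<sigma> ! x0 through a port in Lbl, provided A and Lbl are
  closed as below. Running it to the root of q shows which port of \<sigma> ! x0 points to
  the root of p.\<close>

definition block_closed :: "nat \<Rightarrow> nat set \<Rightarrow> nat set \<Rightarrow> bool" where
  "block_closed x0 A Lbl \<longleftrightarrow>
     (\<forall>y y'. y \<in> A \<longrightarrow> (y, y') \<in> adj_avoid (qs ! (\<sigma> ! x0)) (rank \<sigma> x0) \<longrightarrow> y' \<in> A)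
   \<and> (\<forall>y c m. y \<in> A \<longrightarrow> c < length (qs ! (\<sigma> ! x0) ! y) \<longrightarrow> qs ! (\<sigma> ! x0) ! y ! c = Lf m \<longrightarrow> m \<in> Lbl)
   \<and> (\<forall>m y c. m \<in> Lbl \<longrightarrow> y < length (qs ! (\<sigma> ! x0)) \<longrightarrow> c < length (qs ! (\<sigma> ! x0) ! y)
        \<longrightarrow> qs ! (\<sigma> ! x0) ! y ! c = Lf m \<longrightarrow> y \<noteq> rank \<sigma> x0 \<longrightarrow> y \<in> A)"

definition reach_inv :: "nat \<Rightarrow> nat set \<Rightarrow> nat set \<Rightarrow> nat \<Rightarrow> bool" where
  "reach_inv x0 A Lbl z \<longleftrightarrow> z < length \<sigma> \<and> (\<sigma> ! z = \<sigma> ! x0 \<longrightarrow> rank \<sigma> z \<in> A)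
     \<and> (\<sigma> ! z \<noteq> \<sigma> ! x0 \<longrightarrow> (\<exists>m \<in> Lbl. port_reaches (\<sigma> ! x0) m (\<sigma> ! z)))"

lemma reach_inv_step_inner:
  assumes x0: "x0 < length \<sigma>" and closed: "block_closed x0 A Lbl" and I: "reach_inv x0 A Lbl z"
    and z: "z < length \<sigma>" "z' < length \<sigma>" "z \<noteq> x0" "z' \<noteq> x0"
    and same: "\<sigma> ! z' = \<sigma> ! z" and adj: "adj (qs ! (\<sigma> ! z)) (rank \<sigma> z) (rank \<sigma> z')"
  shows "reach_inv x0 A Lbl z'"
proof (cases "\<sigma> ! z = \<sigma> ! x0")
  case True
  have "rank \<sigma> z \<noteq> rank \<sigma> x0" "rank \<sigma> z' \<noteq> rank \<sigma> x0"
    using rank_inj[OF x0 z(1)] rank_inj[OF x0 z(2)] True same z(3,4) by auto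
  then have "(rank \<sigma> z, rank \<sigma> z') \<in> adj_avoid (qs ! (\<sigma> ! x0)) (rank \<sigma> x0)"
    using adj True unfolding adj_avoid_def by simp
  then show ?thesis using closed I True same z(2) unfolding block_closed_def reach_inv_def by metis
next
  case False
  then show ?thesis using I same z(2) unfolding reach_inv_def by simp
qed

lemma reach_inv_step_outer:
  assumes x0: "x0 < length \<sigma>" and closed: "block_closed x0 A Lbl" and I: "reach_inv x0 A Lbl z"
    and z: "z < length \<sigma>" "z' < length \<sigma>" "z' \<noteq> x0"
    and c: "c < length (qs ! (\<sigma> ! z) ! rank \<sigma> z)" "qs ! (\<sigma> ! z) ! rank \<sigma> z ! c = Lf m"
    and m: "m < length (p ! (\<sigma> ! z))" "p ! (\<sigma> ! z) ! m = Ed (\<sigma> ! z') m'"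
    and b: "b < length (qs ! (\<sigma> ! z') ! rank \<sigma> z')" "qs ! (\<sigma> ! z') ! rank \<sigma> z' ! b = Lf m'"
  shows "reach_inv x0 A Lbl z'"
proof -
  let ?l = "\<sigma> ! x0"
  have l: "?l < length p" and lz: "\<sigma> ! z < length p" using assign_lt x0 z by auto
  have m': "m' < length (p ! (\<sigma> ! z'))" "p ! (\<sigma> ! z') ! m' = Ed (\<sigma> ! z) m"
    using wf_og_partner[OF wf_p lz m] by blast+
  have "\<sigma> ! z' \<noteq> \<sigma> ! z" using tree_no_loop[OF tree_p lz m] .
  consider "\<sigma> ! z = ?l" | "\<sigma> ! z \<noteq> ?l" "\<sigma> ! z' = ?l" | "\<sigma> ! z \<noteq> ?l" "\<sigma> ! z' \<noteq> ?l" by blast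
  then show ?thesis
  proof cases
    case 1
    then have "m \<in> Lbl" using closed I c unfolding block_closed_def reach_inv_def by metis
    moreover have "port_reaches ?l m (\<sigma> ! z')" using m 1 unfolding port_reaches_def by auto
    ultimately show ?thesis using z(2) 1 \<open>\<sigma> ! z' \<noteq> \<sigma> ! z\<close> unfolding reach_inv_def by auto
  next
    case 2
    obtain m1 where m1: "m1 \<in> Lbl" "port_reaches ?l m1 (\<sigma> ! z)" using I 2 unfolding reach_inv_def by blast
    have "port_reaches ?l m' (\<sigma> ! z)" using m' 2 unfolding port_reaches_def by auto
    then have "m' \<in> Lbl" using port_reaches_unique[OF l m1(2)] m1(1) by simp
    moreover have "rank \<sigma> z' \<noteq> rank \<sigma> x0" using rank_inj[OF x0 z(2)] 2 z(3) by auto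
    moreover have "rank \<sigma> z' < length (qs ! ?l)" using rank_lt_qs[OF z(2)] 2 by simp
    ultimately have "rank \<sigma> z' \<in> A" using closed b 2 unfolding block_closed_def by metis
    then show ?thesis using z(2) 2 unfolding reach_inv_def by simp
  next
    case 3
    obtain m1 where m1: "m1 \<in> Lbl" "port_reaches ?l m1 (\<sigma> ! z)" using I 3 unfolding reach_inv_def by blast
    have "(\<sigma> ! z, \<sigma> ! z') \<in> adj_avoid p ?l"
      using 3 lz m unfolding adj_avoid_def adj_iff by blast
    then have "port_reaches ?l m1 (\<sigma> ! z')"
      using m1(2) unfolding port_reaches_def by (meson rtrancl_into_rtrancl)
    then show ?thesis using z(2) 3 m1(1) unfolding reach_inv_def by blast
  qed
qed

lemma reach_inv_path:
  assumes x0: "x0 < length \<sigma>" and closed: "block_closed x0 A Lbl"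
    and path: "(z, z') \<in> (adj_avoid q x0)\<^sup>*" and I: "reach_inv x0 A Lbl z"
  shows "reach_inv x0 A Lbl z'"
  using path I
proof (induction rule: rtrancl_induct)
  case (step y y')
  then have I: "reach_inv x0 A Lbl y" by blast
  have y: "y \<noteq> x0" "y' \<noteq> x0" "adj q y y'" using step.hyps(2) unfolding adj_avoid_def by simp_all
  show ?case
    using adj_q_cases[OF y(3)] reach_inv_step_inner[OF x0 closed I _ _ y(1,2)]
      reach_inv_step_outer[OF x0 closed I _ _ y(2)] by blast
qed

lemma reach_inv_root:
  assumes x0: "x0 < length \<sigma>" and I: "reach_inv x0 A Lbl root_q"
  shows "root_p = \<sigma> ! x0 \<and> root_qs \<in> A \<or> root_p \<noteq> \<sigma> ! x0 \<and> leaf_port p 0 (\<sigma> ! x0) \<in> Lbl"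
proof (cases "root_p = \<sigma> ! x0")
  case False
  then obtain m where "m \<in> Lbl" "port_reaches (\<sigma> ! x0) m root_p"
    using I root_q_spec unfolding reach_inv_def by auto
  then show ?thesis
    using port_reaches_unique[OF assign_lt[OF x0] _ port_reaches_leaf_port[OF assign_lt[OF x0] False]] False
    by metis
qed (use I root_q_spec in \<open>simp add: reach_inv_def\<close>)

lemma block_closed_component:
  assumes x0: "x0 < length \<sigma>" and w0: "w0 < length (qs ! (\<sigma> ! x0))"
    and A_def: "A = {y. (w0, y) \<in> (adj_avoid (qs ! (\<sigma> ! x0)) (rank \<sigma> x0))\<^sup>*}"
    and Lbl_def: "Lbl = {m. \<exists>y \<in> A. \<exists>c < length (qs ! (\<sigma> ! x0) ! y). qs ! (\<sigma> ! x0) ! y ! c = Lf m}"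
  shows "block_closed x0 A Lbl"
  unfolding block_closed_def
proof (intro conjI allI impI)
  let ?l = "\<sigma> ! x0" and ?r = "rank \<sigma> x0"
  have wf: "wf_og (qs ! ?l)" using wf_qs[OF assign_lt[OF x0]] .
  fix m y c assume m: "m \<in> Lbl" and y: "y < length (qs ! ?l)" "c < length (qs ! ?l ! y)" "qs ! ?l ! y ! c = Lf m"
  obtain y' c' where y': "y' \<in> A" "c' < length (qs ! ?l ! y')" "qs ! ?l ! y' ! c' = Lf m"
    using m unfolding Lbl_def by blast
  have "y' < length (qs ! ?l)" using adj_avoid_rtrancl_lt[OF wf _ w0] y'(1) unfolding A_def by blast
  then have "y = y'" using wf_og_leaf_unique[OF wf _ y'(2,3) y] by simp
  then show "y \<in> A" using y'(1) by simp
qed (auto simp: A_def Lbl_def intro: rtrancl_into_rtrancl)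

lemma toward_leaf_subst_only_if_Ed:
  assumes x0: "x0 < length \<sigma>" and i: "i < length (qs ! (\<sigma> ! x0) ! rank \<sigma> x0)"
    and e: "qs ! (\<sigma> ! x0) ! rank \<sigma> x0 ! i = Ed w0 j"
    and path: "(pos \<sigma> (\<sigma> ! x0) w0, root_q) \<in> (adj_avoid q x0)\<^sup>*"
  shows "toward_leaf (qs ! (\<sigma> ! x0)) (leaf_port p 0 (\<sigma> ! x0)) (rank \<sigma> x0) i"
proof -
  let ?l = "\<sigma> ! x0" and ?r = "rank \<sigma> x0" and ?\<rho> = "leaf_port p 0 (\<sigma> ! x0)"
  have l: "?l < length p" and r: "?r < length (qs ! ?l)" using assign_lt[OF x0] rank_lt_qs[OF x0] .
  have w0: "w0 < length (qs ! ?l)" using partner_qs_lt[OF l r i e] by simp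
  define A where "A = {y. (w0, y) \<in> (adj_avoid (qs ! ?l) ?r)\<^sup>*}"
  define Lbl where "Lbl = {m. \<exists>y \<in> A. \<exists>c < length (qs ! ?l ! y). qs ! ?l ! y ! c = Lf m}"
  have "reach_inv x0 A Lbl (pos \<sigma> ?l w0)"
    unfolding reach_inv_def A_def using pos_qs[OF l w0] by simp
  then have "root_p = ?l \<and> root_qs \<in> A \<or> root_p \<noteq> ?l \<and> ?\<rho> \<in> Lbl"
    using reach_inv_root[OF x0 reach_inv_path[OF x0 block_closed_component[OF x0 w0 A_def Lbl_def] path]]
    by blast
  then obtain y c where y: "y \<in> A" "c < length (qs ! ?l ! y)" "qs ! ?l ! y ! c = Lf ?\<rho>"
  proof (elim disjE conjE)
    assume "root_p = ?l" "root_qs \<in> A"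
    then show thesis using that[of root_qs root_port_qs] root_qs_spec root_port_p_eq_leaf_port by simp
  next
    assume "?\<rho> \<in> Lbl"
    then show thesis using that unfolding Lbl_def by blast
  qed
  have "y < length (qs ! ?l)" using adj_avoid_rtrancl_lt[OF wf_qs[OF l] _ w0] y(1) unfolding A_def by blast
  then have "leaf_at (qs ! ?l) ?\<rho> = (y, c)" by (rule leaf_at_eqI[OF wf_qs[OF l] _ y(2,3)])
  then show ?thesis using i e y(1) unfolding toward_leaf_def A_def by simp
qed

lemma toward_leaf_subst_only_if_Lf:
  assumes x0: "x0 < length \<sigma>" and i: "i < length (qs ! (\<sigma> ! x0) ! rank \<sigma> x0)"
    and e: "qs ! (\<sigma> ! x0) ! rank \<sigma> x0 ! i = Lf m0" "p ! (\<sigma> ! x0) ! m0 = Ed l0 j0"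
    and path: "(pos \<sigma> l0 (fst (leaf_at (qs ! l0) j0)), root_q) \<in> (adj_avoid q x0)\<^sup>*"
  shows "m0 = leaf_port p 0 (\<sigma> ! x0)"
proof -
  let ?l = "\<sigma> ! x0" and ?r = "rank \<sigma> x0"
  have l: "?l < length p" and r: "?r < length (qs ! ?l)" using assign_lt[OF x0] rank_lt_qs[OF x0] .
  have m0: "m0 < length (p ! ?l)" using leaf_label_qs_lt[OF l r i e(1)] .
  have l0: "l0 < length p" "j0 < length (p ! l0)" using wf_og_partner[OF wf_p l m0 e(2)] by blast+
  have "block_closed x0 {} {m0}"
    unfolding block_closed_def using wf_og_leaf_unique[OF wf_qs[OF l] r i e(1)] by auto
  moreover have "reach_inv x0 {} {m0} (pos \<sigma> l0 (fst (leaf_at (qs ! l0) j0)))"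
    unfolding reach_inv_def port_reaches_def
    using pos_qs[OF l0(1) leaf_at_qs(1)[OF l0]] tree_no_loop[OF tree_p l m0 e(2)] m0 e(2) by auto
  ultimately show ?thesis using reach_inv_root[OF x0 reach_inv_path[OF x0 _ path]] by blast
qed

lemma toward_leaf_subst_only_if:
  assumes x0: "x0 < length \<sigma>" and toward: "toward_leaf q 0 x0 i"
  shows "toward_leaf (qs ! (\<sigma> ! x0)) (leaf_port p 0 (\<sigma> ! x0)) (rank \<sigma> x0) i"
proof -
  let ?l = "\<sigma> ! x0" and ?r = "rank \<sigma> x0"
  have l: "?l < length p" and r: "?r < length (qs ! ?l)" using assign_lt[OF x0] rank_lt_qs[OF x0] .
  have i: "i < length (qs ! ?l ! ?r)" using toward length_q_nth[OF x0] unfolding toward_leaf_def by simp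
  have to_root: "q ! x0 ! i = Lf 0 \<or> (\<exists>z j. q ! x0 ! i = Ed z j \<and> (z, root_q) \<in> (adj_avoid q x0)\<^sup>*)"
    using toward leaf_at_q_0 unfolding toward_leaf_def by simp
  show ?thesis
  proof (cases "qs ! ?l ! ?r ! i")
    case (Ed w0 j)
    then show ?thesis
      using toward_leaf_subst_only_if_Ed[OF x0 i Ed] to_root q_nth_Ed[OF x0 i Ed] by simp
  next
    case (Lf m0)
    have m0: "m0 < length (p ! ?l)" using leaf_label_qs_lt[OF l r i Lf] .
    have "m0 = leaf_port p 0 ?l"
    proof (cases "p ! ?l ! m0")
      case (Lf k)
      then have "toward_leaf p 0 ?l m0"
        using q_nth_Lf_Lf[OF x0 i \<open>qs ! ?l ! ?r ! i = Lf m0\<close>] to_root m0 unfolding toward_leaf_def by simp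
      then show ?thesis using leaf_port_p_spec(3)[OF l] by blast
    next
      case (Ed l0 j0)
      then show ?thesis using toward_leaf_subst_only_if_Lf[OF x0 i \<open>qs ! ?l ! ?r ! i = Lf m0\<close> Ed]
          to_root q_nth_Lf_Ed[OF x0 i \<open>qs ! ?l ! ?r ! i = Lf m0\<close> Ed] by simp
    qed
    then show ?thesis using i Lf unfolding toward_leaf_def by simp
  qed
qed

lemma leaf_port_subst:
  assumes x0: "x0 < length \<sigma>"
  shows "leaf_port q 0 x0 = leaf_port (qs ! (\<sigma> ! x0)) (leaf_port p 0 (\<sigma> ! x0)) (rank \<sigma> x0)"
proof -
  have "toward_leaf q 0 x0 = toward_leaf (qs ! (\<sigma> ! x0)) (leaf_port p 0 (\<sigma> ! x0)) (rank \<sigma> x0)"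
    using toward_leaf_subst_if[OF x0] toward_leaf_subst_only_if[OF x0] by blast
  then show ?thesis unfolding leaf_port_def by (simp only:)
qed

definition relabelled :: "nat \<Rightarrow> og" where
  "relabelled l = relabel_leaves (front_perm_inv (leaf_port p 0 l)) (qs ! l)"

lemma relabelled_spec:
  assumes l: "l < length p"
  shows "bij_betw (front_perm_inv (leaf_port p 0 l)) {..<num_leaves (qs ! l)} {..<num_leaves (qs ! l)}"
    "cyc_tree (relabelled l)" "wf_og (relabelled l)"
proof -
  show b: "bij_betw (front_perm_inv (leaf_port p 0 l)) {..<num_leaves (qs ! l)} {..<num_leaves (qs ! l)}"
    using bij_betw_front_perm_inv leaf_port_p_spec(2)[OF l] leaves_qs[OF l] by simp
  show "cyc_tree (relabelled l)" unfolding relabelled_def by (rule cyc_tree_relabel_leaves[OF cyc_tree_qs[OF l] b])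
  then show "wf_og (relabelled l)" by (rule cyc_treeD(2))
qed

lemma reroot_inserts_nth: "l < length p \<Longrightarrow> reroot_inserts p qs ! l = reroot (relabelled l)"
  by (simp add: reroot_inserts_def relabelled_def)

lemma leaf_port_subst_relabelled:
  assumes x: "x < length \<sigma>"
  shows "leaf_port q 0 x = leaf_port (relabelled (\<sigma> ! x)) 0 (rank \<sigma> x)"
proof -
  have l: "\<sigma> ! x < length p" by (rule assign_lt[OF x])
  have "leaf_port p 0 (\<sigma> ! x) < num_leaves (qs ! (\<sigma> ! x))"
    using leaf_port_p_spec(2)[OF l] leaves_qs[OF l] by simp
  from leaf_port_relabel_leaves[OF wf_qs[OF l] relabelled_spec(1)[OF l] this rank_lt_qs[OF x]]
  show ?thesis unfolding leaf_port_subst[OF x] relabelled_def by simp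
qed

lemma leaf_at_reroot_relabelled:
  assumes l: "l < length p" and i: "i < length (p ! l)"
  defines "a \<equiv> fst (leaf_at (qs ! l) i)" and "b \<equiv> snd (leaf_at (qs ! l) i)"
  shows "leaf_at (reroot (relabelled l)) (front_perm_inv (leaf_port p 0 l) i)
       = (a, front_perm_inv (leaf_port (relabelled l) 0 a) b)"
proof -
  have i': "i < num_leaves (qs ! l)" using i leaves_qs[OF l] by simp
  have "leaf_at (relabelled l) (front_perm_inv (leaf_port p 0 l) i) = (a, b)"
    unfolding relabelled_def a_def b_def using leaf_at_relabel_leaves[OF wf_qs[OF l] relabelled_spec(1)[OF l] i'] by simp
  moreover have "front_perm_inv (leaf_port p 0 l) i < num_leaves (relabelled l)"
    using front_perm_inv_lt[OF _ i'] leaf_port_p_spec(2)[OF l] leaves_qs[OF l] by (simp add: relabelled_def)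
  ultimately show ?thesis
    unfolding reroot_def using leaf_at_permute_ports[OF ports_perm_reroot relabelled_spec(3)[OF l]] by simp
qed

lemma reroot_tr_hend:
  assumes l: "l < length p" and r: "r < length (qs ! l)" and c: "c < length (qs ! l ! r)"
  shows "port_rename (\<lambda>v. front_perm_inv (leaf_port q 0 v)) (tr_hend p qs \<sigma> l (qs ! l ! r ! c))
    = tr_hend (reroot p) (reroot_inserts p qs) \<sigma> l
        (port_rename (\<lambda>v. front_perm_inv (leaf_port (relabelled l) 0 v))
          (relabel_hend (front_perm_inv (leaf_port p 0 l)) (qs ! l ! r ! c)))"
proof (cases "qs ! l ! r ! c")
  case (Ed w j)
  have w: "w < length (qs ! l)" using partner_qs_lt[OF l r c Ed] by simp
  then show ?thesis using Ed leaf_port_subst_relabelled[OF pos_qs(1)[OF l w]] pos_qs[OF l w] by simp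
next
  case (Lf m)
  have m: "m < length (p ! l)" using leaf_label_qs_lt[OF l r c Lf] .
  have reroot_p: "reroot p ! l ! front_perm_inv (leaf_port p 0 l) m
      = port_rename (\<lambda>v. front_perm_inv (leaf_port p 0 v)) (p ! l ! m)"
    by (rule reroot_nth_front_perm_inv[OF l m])
  show ?thesis
  proof (cases "p ! l ! m")
    case (Lf k)
    then show ?thesis using \<open>qs ! l ! r ! c = Lf m\<close> reroot_p by (simp add: tr_hend_Lf_Lf)
  next
    case (Ed l' i')
    have l': "l' < length p" "i' < length (p ! l')" using wf_og_partner[OF wf_p l m Ed] by blast+
    let ?a = "fst (leaf_at (qs ! l') i')"
    have "leaf_port q 0 (pos \<sigma> l' ?a) = leaf_port (relabelled l') 0 ?a"
      using leaf_port_subst_relabelled[OF pos_qs(1)[OF l' (1) leaf_at_qs(1)[OF l']]]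
        pos_qs[OF l'(1) leaf_at_qs(1)[OF l']] by simp
    then show ?thesis
      using \<open>qs ! l ! r ! c = Lf m\<close> reroot_p Ed leaf_at_reroot_relabelled[OF l']
      by (simp add: tr_hend_Lf_Ed reroot_inserts_nth l')
  qed
qed

lemma reroot_subst: "reroot q = subst (reroot p) (reroot_inserts p qs) \<sigma>"
proof (rule nth_equalityI)
  fix x assume "x < length (reroot q)"
  then have x: "x < length \<sigma>" by simp
  let ?l = "\<sigma> ! x" and ?r = "rank \<sigma> x"
  have l: "?l < length p" and r: "?r < length (qs ! ?l)" using assign_lt[OF x] rank_lt_qs[OF x] .
  have ins: "reroot_inserts p qs ! ?l = reroot (relabelled ?l)" by (rule reroot_inserts_nth[OF l])
  show "reroot q ! x = subst (reroot p) (reroot_inserts p qs) \<sigma> ! x"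
  proof (rule nth_equalityI)
    show "length (reroot q ! x) = length (subst (reroot p) (reroot_inserts p qs) \<sigma> ! x)"
      using x r length_q_nth[OF x] by (simp add: subst_nth ins relabelled_def)
  next
    fix i assume "i < length (reroot q ! x)"
    then have i: "i < length (qs ! ?l ! ?r)" using x length_q_nth[OF x] by simp
    let ?\<delta> = "leaf_port q 0 x"
    have "?\<delta> < length (qs ! ?l ! ?r)" using leaf_port_lt_length[of i q x 0] i length_q_nth[OF x] by simp
    then have c: "front_perm ?\<delta> i < length (qs ! ?l ! ?r)" using front_perm_lt i by blast
    have "reroot q ! x ! i = port_rename (\<lambda>v. front_perm_inv (leaf_port q 0 v))
        (tr_hend p qs \<sigma> ?l (qs ! ?l ! ?r ! front_perm ?\<delta> i))"
      using reroot_nth[of x q i] x i c length_q_nth[OF x] q_nth_nth[OF x] by simp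
    also have "\<dots> = subst (reroot p) (reroot_inserts p qs) \<sigma> ! x ! i"
      using reroot_tr_hend[OF l r c] reroot_nth[of ?r "relabelled ?l" i] r i
        leaf_port_subst_relabelled[OF x] relabel_leaves_nth[OF r c]
      by (simp add: subst_nth x ins relabelled_def)
    finally show "reroot q ! x ! i = subst (reroot p) (reroot_inserts p qs) \<sigma> ! x ! i" .
  qed
qed simp

end

lemma cyc_tree_nonempty: "cyc_tree G \<Longrightarrow> G \<noteq> []"
  unfolding cyc_tree_def is_tree_def by auto

lemma valid_subst_iff:
  assumes "cyc_tree p"
  shows "valid_subst p qs \<sigma> q \<longleftrightarrow> subst_tree p qs \<sigma> \<and> subst p qs \<sigma> = q"
  using assms cyc_tree_nonempty unfolding valid_subst_def subst_tree_def by (auto simp: length_fiber)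

context subst_tree
begin

lemma relabel_subst: "relabel_leaves s q = subst (relabel_leaves s p) qs \<sigma>"
proof (rule nth_equalityI)
  fix x assume "x < length (relabel_leaves s q)"
  then have x: "x < length \<sigma>" by simp
  let ?l = "\<sigma> ! x" and ?r = "rank \<sigma> x"
  have l: "?l < length p" and r: "?r < length (qs ! ?l)" using assign_lt[OF x] rank_lt_qs[OF x] .
  show "relabel_leaves s q ! x = subst (relabel_leaves s p) qs \<sigma> ! x"
  proof (rule nth_equalityI)
    fix i assume "i < length (relabel_leaves s q ! x)"
    then have i: "i < length (qs ! ?l ! ?r)" and iq: "i < length (q ! x)" using x length_q_nth[OF x] by simp_all
    have "relabel_leaves s q ! x ! i = relabel_hend s (tr_hend p qs \<sigma> ?l (qs ! ?l ! ?r ! i))"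
      using relabel_leaves_nth[of x q i s] x iq q_nth_nth[OF x iq] by simp
    moreover have "subst (relabel_leaves s p) qs \<sigma> ! x ! i = tr_hend (relabel_leaves s p) qs \<sigma> ?l (qs ! ?l ! ?r ! i)"
      using subst_nth[OF x] i by simp
    moreover have "relabel_hend s (tr_hend p qs \<sigma> ?l (Lf m)) = tr_hend (relabel_leaves s p) qs \<sigma> ?l (Lf m)"
      if "m < length (p ! ?l)" for m
      using relabel_leaves_nth[OF l that] by (cases "p ! ?l ! m") (simp_all add: tr_hend_def)
    ultimately show "relabel_leaves s q ! x ! i = subst (relabel_leaves s p) qs \<sigma> ! x ! i"
      using leaf_label_qs_lt[OF l r i] by (cases "qs ! ?l ! ?r ! i") simp_all
  qed (use x length_q_nth[OF x] in \<open>simp add: subst_nth\<close>)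
qed simp

lemma subst_tree_relabel: "cyc_tree (relabel_leaves s p) \<Longrightarrow> subst_tree (relabel_leaves s p) qs \<sigma>"
  using length_qs cyc_tree_qs leaves_qs set_assign length_fiber_qs by unfold_locales simp_all

lemma subst_tree_reroot: "subst_tree (reroot p) (reroot_inserts p qs) \<sigma>"
proof unfold_locales
  fix l assume "l < length (reroot p)"
  then have l: "l < length p" by simp
  show "cyc_tree (reroot_inserts p qs ! l)"
    using reroot_inserts_nth[OF l] cyc_tree_reroot[OF relabelled_spec(2)[OF l]] by simp
  show "num_leaves (reroot_inserts p qs ! l) = length (reroot p ! l)"
    using reroot_inserts_nth[OF l] num_leaves_permute_ports[OF ports_perm_reroot] leaves_qs[OF l] l
    by (simp add: reroot_def relabelled_def)
  show "length (fiber \<sigma> l) = length (reroot_inserts p qs ! l)"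
    using reroot_inserts_nth[OF l] length_fiber_qs[OF l] by (simp add: relabelled_def)
qed (use cyc_tree_reroot[OF cyc_tree_p] set_assign in \<open>simp_all add: reroot_inserts_def\<close>)

lemma rooted_reroot_inserts: "l < length p \<Longrightarrow> rooted (reroot_inserts p qs ! l)"
  using reroot_inserts_nth rooted_reroot[OF relabelled_spec(2)] by simp

text \<open>The trees and the vertex assignment that op_comp substitutes into qs ! l when
  composing with a morphism out of q given by rs and \<tau>.\<close>

abbreviation comp_inserts :: "og list \<Rightarrow> nat \<Rightarrow> og list" where
  "comp_inserts rs l \<equiv> map (\<lambda>r. rs ! pos \<sigma> l r) [0..<length (qs ! l)]"

abbreviation comp_assign :: "nat list \<Rightarrow> nat \<Rightarrow> nat list" where
  "comp_assign \<tau> l \<equiv> map (rank \<sigma>) (filter (\<lambda>y. \<sigma> ! y = l) \<tau>)"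

lemma subst_tree_comp_inserts:
  assumes g: "subst_tree q rs \<tau>" and l: "l < length p"
  shows "subst_tree (qs ! l) (comp_inserts rs l) (comp_assign \<tau> l)"
proof unfold_locales
  fix r assume r: "r < length (qs ! l)"
  note pos = pos_qs[OF l r]
  show "cyc_tree (comp_inserts rs l ! r)" using subst_tree.cyc_tree_qs[OF g] pos r by simp
  show "num_leaves (comp_inserts rs l ! r) = length (qs ! l ! r)"
    using subst_tree.leaves_qs[OF g] pos r length_q_nth[OF pos(1)] by simp
  have "set \<tau> \<subseteq> {..<length \<sigma>}" using subst_tree.set_assign[OF g] by simp
  have "length (fiber (comp_assign \<tau> l) r) = length (filter (\<lambda>y. y = r) (comp_assign \<tau> l))"
    by (rule length_fiber)
  also have "\<dots> = length (filter (\<lambda>y. y = pos \<sigma> l r) \<tau>)"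
    using count_map_rank_fiber[OF \<open>set \<tau> \<subseteq> {..<length \<sigma>}\<close>] r length_fiber_qs[OF l] by simp
  also have "\<dots> = length (rs ! pos \<sigma> l r)"
    using subst_tree.length_fiber_qs[OF g, of "pos \<sigma> l r"] pos(1) length_fiber by simp
  finally show "length (fiber (comp_assign \<tau> l) r) = length (comp_inserts rs l ! r)" using r by simp
next
  show "set (comp_assign \<tau> l) \<subseteq> {..<length (qs ! l)}"
    using subst_tree.set_assign[OF g] rank_lt_qs by auto
qed (use cyc_tree_qs[OF l] in simp_all)

lemma reroot_comp_inserts:
  assumes g: "subst_tree q rs \<tau>" and l: "l < length p"
  shows "reroot (relabel_leaves (front_perm_inv (leaf_port p 0 l)) (subst (qs ! l) (comp_inserts rs l) (comp_assign \<tau> l)))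
    = subst (reroot_inserts p qs ! l) (map (\<lambda>r. reroot_inserts q rs ! pos \<sigma> l r) [0..<length (reroot_inserts p qs ! l)])
        (comp_assign \<tau> l)"
proof -
  interpret inner: subst_tree "qs ! l" "comp_inserts rs l" "comp_assign \<tau> l"
    by (rule subst_tree_comp_inserts[OF g l])
  interpret relabelled_inner: subst_tree "relabelled l" "comp_inserts rs l" "comp_assign \<tau> l"
    unfolding relabelled_def by (rule inner.subst_tree_relabel[OF relabelled_spec(2)[OF l, unfolded relabelled_def]])
  have "reroot_inserts (relabelled l) (comp_inserts rs l)
      = map (\<lambda>r. reroot_inserts q rs ! pos \<sigma> l r) [0..<length (reroot_inserts p qs ! l)]"
  proof (rule nth_equalityI)
    fix r assume "r < length (reroot_inserts (relabelled l) (comp_inserts rs l))"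
    then have r: "r < length (qs ! l)" by (simp add: reroot_inserts_def relabelled_def)
    note pos = pos_qs[OF l r]
    have "leaf_port q 0 (pos \<sigma> l r) = leaf_port (relabelled l) 0 r"
      using leaf_port_subst_relabelled[OF pos(1)] pos by simp
    then show "reroot_inserts (relabelled l) (comp_inserts rs l) ! r
        = map (\<lambda>r. reroot_inserts q rs ! pos \<sigma> l r) [0..<length (reroot_inserts p qs ! l)] ! r"
      using r pos l by (simp add: reroot_inserts_def reroot_inserts_nth relabelled_def)
  qed (use l in \<open>simp add: reroot_inserts_def reroot_inserts_nth relabelled_def\<close>)
  then show ?thesis
    using inner.relabel_subst relabelled_inner.reroot_subst reroot_inserts_nth[OF l] unfolding relabelled_def by simp
qed

lemma op_comp_perm_corollas_left:
  assumes E: "\<And>x. x < length \<sigma> \<Longrightarrow> E ! x = perm_corolla (t x) (length (q ! x))"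
  shows "op_comp (q, E, [0..<length \<sigma>], c) (p, qs, \<sigma>, q)
    = (p, map (\<lambda>l. subst (qs ! l) (map (\<lambda>r. perm_corolla (t (pos \<sigma> l r)) (length (qs ! l ! r))) [0..<length (qs ! l)])
                [0..<length (qs ! l)]) [0..<length p], \<sigma>, c)"
proof -
  have "subst (qs ! l) (map (\<lambda>r. E ! pos \<sigma> l r) [0..<length (qs ! l)]) (map (rank \<sigma>) (fiber \<sigma> l))
      = subst (qs ! l) (map (\<lambda>r. perm_corolla (t (pos \<sigma> l r)) (length (qs ! l ! r))) [0..<length (qs ! l)])
          [0..<length (qs ! l)]" if l: "l < length p" for l
  proof -
    have "map (\<lambda>r. E ! pos \<sigma> l r) [0..<length (qs ! l)]
        = map (\<lambda>r. perm_corolla (t (pos \<sigma> l r)) (length (qs ! l ! r))) [0..<length (qs ! l)]"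
      by (rule map_cong) (use E pos_qs[OF l] length_q_nth in auto)
    moreover have "map (rank \<sigma>) (fiber \<sigma> l) = [0..<length (qs ! l)]"
      using map_rank_fiber[of \<sigma> l] length_fiber_qs[OF l] by simp
    ultimately show ?thesis by (simp only:)
  qed
  then show ?thesis by (simp add: map_nth)
qed

end

lemma op_comp_perm_corollas_right:
  assumes E: "\<And>l. l < length a \<Longrightarrow> E ! l = perm_corolla (s l) (length (a ! l))"
    and \<sigma>: "set \<sigma> \<subseteq> {..<length a}"
    and qs: "\<And>l. l < length a \<Longrightarrow> wf_og (qs ! l) \<and> num_leaves (qs ! l) \<le> length (a ! l)
        \<and> length (filter (\<lambda>y. y = l) \<sigma>) = length (qs ! l)"
  shows "op_comp (a', qs, \<sigma>, b) (a, E, [0..<length a], a')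
    = (a, map (\<lambda>l. relabel_leaves (s l) (qs ! l)) [0..<length a], \<sigma>, b)"
proof -
  have "subst (E ! l) (map (\<lambda>r. qs ! pos [0..<length a] l r) [0..<length (E ! l)])
      (map (rank [0..<length a]) (filter (\<lambda>y. [0..<length a] ! y = l) \<sigma>)) = relabel_leaves (s l) (qs ! l)"
    if l: "l < length a" for l
    using E[OF l] pos_upt[OF l] map_rank_upt_filter[OF \<sigma> l] qs[OF l]
      subst_into_perm_corolla[of "qs ! l" "length (a ! l)" "s l"] by simp
  then show ?thesis using map_nth_upt[OF \<sigma>] by simp
qed

lemma relabel_perm_corolla: "(\<And>i. i < d \<Longrightarrow> s (t i) = i) \<Longrightarrow> relabel_leaves s (perm_corolla t d) = corolla d"
  by (simp add: perm_corolla_def relabel_leaves_def corolla_def)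

lemma subst_tree_perm_corollas:
  assumes X: "cyc_tree X" and s: "\<And>v. v < length X \<Longrightarrow> bij_betw (s v) {..<length (X ! v)} {..<length (X ! v)}"
  shows "subst_tree X (map (\<lambda>v. perm_corolla (s v) (length (X ! v))) [0..<length X]) [0..<length X]"
proof unfold_locales
  fix v assume v: "v < length X"
  show "cyc_tree (map (\<lambda>v. perm_corolla (s v) (length (X ! v))) [0..<length X] ! v)"
    using cyc_tree_perm_corolla[OF _ s[OF v]] cyc_tree_degree_pos[OF X v] v by simp
  show "length (fiber [0..<length X] v) = length (map (\<lambda>v. perm_corolla (s v) (length (X ! v))) [0..<length X] ! v)"
    using fiber_upt[OF v] v by simp
qed (use X in auto)

lemma op_ident_eq: "op_ident p = (p, map (\<lambda>v. perm_corolla (\<lambda>i. i) (length (p ! v))) [0..<length p], [0..<length p], p)"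
proof -
  have "map (\<lambda>row. corolla (length row)) p = map (\<lambda>v. corolla (length (p ! v))) [0..<length p]"
    by (rule nth_equalityI) simp_all
  then show ?thesis unfolding op_ident_def by (simp add: corolla_eq_perm_corolla)
qed

lemma subst_tree_op_ident:
  assumes "cyc_tree p"
  shows "subst_tree p (map (\<lambda>v. perm_corolla (\<lambda>i. i) (length (p ! v))) [0..<length p]) [0..<length p]"
  by (rule subst_tree_perm_corollas[OF assms]) (simp add: bij_betw_id[unfolded id_def])

lemma op_ident_hom_nucOp: "cyc_tree p \<Longrightarrow> p \<noteq> [] \<Longrightarrow> op_ident p \<in> Hom nucOp_op p p"
  unfolding nucOp_op_def op_ident_eq
  using valid_subst_iff subst_tree_op_ident subst_corollas[OF cyc_treeD(2)] corolla_eq_perm_corolla by simp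

lemma op_ident_hom_nusOp:
  assumes "rooted p" "p \<noteq> []"
  shows "op_ident p \<in> Hom nusOp_op p p"
proof -
  have "rooted (map (\<lambda>row. corolla (length row)) p ! l)" if "l < length p" for l
    using rooted_corolla cyc_tree_degree_pos[OF rooted_imp_cyc_tree[OF assms(1)] that] that
    by (simp add: Suc_leI)
  then show ?thesis using op_ident_hom_nucOp[OF rooted_imp_cyc_tree assms(2)] assms
    unfolding nucOp_op_def nusOp_op_def op_ident_def by auto
qed

context subst_tree
begin

lemma op_comp_op_ident_left: "op_comp (op_ident q) (p, qs, \<sigma>, q) = (p, qs, \<sigma>, q)"
proof -
  have "op_comp (op_ident q) (p, qs, \<sigma>, q)
      = (p, map (\<lambda>l. subst (qs ! l) (map (\<lambda>r. perm_corolla (\<lambda>i. i) (length (qs ! l ! r))) [0..<length (qs ! l)])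
            [0..<length (qs ! l)]) [0..<length p], \<sigma>, q)"
    unfolding op_ident_eq[of q]
    using op_comp_perm_corollas_left[of "map (\<lambda>v. perm_corolla (\<lambda>i. i) (length (q ! v))) [0..<length q]" "\<lambda>x i. i" q]
    by simp
  also have "map (\<lambda>l. subst (qs ! l) (map (\<lambda>r. perm_corolla (\<lambda>i. i) (length (qs ! l ! r))) [0..<length (qs ! l)])
      [0..<length (qs ! l)]) [0..<length p] = qs"
    by (rule nth_equalityI) (use length_qs subst_corollas[OF wf_qs] in \<open>simp_all add: corolla_eq_perm_corolla\<close>)
  finally show ?thesis .
qed

lemma op_comp_op_ident_right: "op_comp (p, qs, \<sigma>, q) (op_ident p) = (p, qs, \<sigma>, q)"
proof -
  have "op_comp (p, qs, \<sigma>, q) (op_ident p) = (p, map (\<lambda>l. relabel_leaves (\<lambda>i. i) (qs ! l)) [0..<length p], \<sigma>, q)"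
    unfolding op_ident_eq
    by (rule op_comp_perm_corollas_right) (use set_assign wf_qs leaves_qs length_fiber_qs length_fiber in auto)
  also have "map (\<lambda>l. relabel_leaves (\<lambda>i. i) (qs ! l)) [0..<length p] = qs"
    by (rule nth_equalityI) (simp_all add: length_qs relabel_leaves_id)
  finally show ?thesis .
qed

end

definition reroot_mor :: "opmor \<Rightarrow> opmor" where
  "reroot_mor f = (case f of (a, qs, \<sigma>, b) \<Rightarrow> (reroot a, reroot_inserts a qs, \<sigma>, reroot b))"

lemma reroot_mor_simp [simp]: "reroot_mor (a, qs, \<sigma>, b) = (reroot a, reroot_inserts a qs, \<sigma>, reroot b)"
  by (simp add: reroot_mor_def)

context subst_tree
begin

lemma reroot_mor_op_comp:
  assumes g: "subst_tree q rs \<tau>"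
  shows "reroot_mor (op_comp (q, rs, \<tau>, c) (p, qs, \<sigma>, q))
       = op_comp (reroot_mor (q, rs, \<tau>, c)) (reroot_mor (p, qs, \<sigma>, q))"
proof -
  have "reroot_inserts p (map (\<lambda>l. subst (qs ! l) (comp_inserts rs l) (comp_assign \<tau> l)) [0..<length p])
      = map (\<lambda>l. subst (reroot_inserts p qs ! l)
            (map (\<lambda>r. reroot_inserts q rs ! pos \<sigma> l r) [0..<length (reroot_inserts p qs ! l)])
            (comp_assign \<tau> l)) [0..<length (reroot p)]"
    by (rule nth_equalityI) (use reroot_comp_inserts[OF g] in \<open>simp_all add: reroot_inserts_def\<close>)
  then show ?thesis by simp
qed

lemma reroot_mor_rooted:
  assumes "rooted p" "rooted q" "\<And>l. l < length p \<Longrightarrow> rooted (qs ! l)"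
  shows "reroot_mor (p, qs, \<sigma>, q) = (p, qs, \<sigma>, q)"
proof -
  have "reroot_inserts p qs = qs"
    by (rule nth_equalityI)
      (use length_qs leaf_port_rooted[OF assms(1)] reroot_rooted assms(3) relabel_leaves_id
        in \<open>simp_all add: reroot_inserts_def front_perm_inv_0_eq\<close>)
  then show ?thesis using reroot_rooted[OF assms(1)] reroot_rooted[OF assms(2)] by simp
qed

end

lemma reroot_relabel_corolla:
  assumes "\<rho> < d"
  shows "reroot (relabel_leaves (front_perm_inv \<rho>) (corolla d)) = corolla d"
proof -
  let ?P = "perm_corolla (front_perm_inv \<rho>) d"
  have T: "cyc_tree ?P" using cyc_tree_perm_corolla[OF _ bij_betw_front_perm_inv[OF assms]] assms by simp
  have "toward_leaf ?P 0 0 \<rho>" unfolding toward_leaf_def using assms by (simp add: perm_corolla_nth)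
  then have "leaf_port ?P 0 0 = \<rho>" using leaf_port_eqI[OF cyc_treeD(1)[OF T] _ cyc_treeD(3)[OF T]] by simp
  then have "reroot ?P ! 0 ! i = Lf i" if "i < d" for i
    using reroot_nth[of 0 ?P i] that front_perm_lt[OF assms that] by (simp add: perm_corolla_nth)
  then have "reroot ?P = corolla d"
    by (intro nth_equalityI) (simp_all add: corolla_def nth_equalityI)
  then show ?thesis by (simp add: perm_corolla_eq_relabel)
qed

lemma reroot_mor_op_ident:
  assumes "cyc_tree a"
  shows "reroot_mor (op_ident a) = op_ident (reroot a)"
proof -
  have "reroot_inserts a (map (\<lambda>row. corolla (length row)) a) = map (\<lambda>row. corolla (length row)) (reroot a)"
    by (rule nth_equalityI)
      (use reroot_relabel_corolla leaf_port_lt[OF cyc_treeD(1)[OF assms] _ cyc_treeD(3)[OF assms]]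
        in \<open>simp_all add: reroot_inserts_def\<close>)
  then show ?thesis unfolding op_ident_def by simp
qed

section \<open>The counit\<close>

definition reroot_iso :: "og \<Rightarrow> opmor" where
  "reroot_iso a = (reroot a, map (\<lambda>v. perm_corolla (front_perm_inv (leaf_port a 0 v)) (length (a ! v))) [0..<length a],
     [0..<length a], a)"

definition reroot_iso_inv :: "og \<Rightarrow> opmor" where
  "reroot_iso_inv a = (a, map (\<lambda>v. perm_corolla (front_perm (leaf_port a 0 v)) (length (a ! v))) [0..<length a],
     [0..<length a], reroot a)"

lemma map_perm_corolla_reroot:
  "map (\<lambda>v. perm_corolla (s v) (length (reroot a ! v))) [0..<length a]
     = map (\<lambda>v. perm_corolla (s v) (length (a ! v))) [0..<length a]"
  by (simp cong: map_cong)

lemma wf_og_perm_corolla: "bij_betw s {..<d} {..<d} \<Longrightarrow> wf_og (perm_corolla s d)"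
  unfolding perm_corolla_eq_relabel by (rule wf_og_relabel_leaves[OF wf_og_corolla]) simp

lemma subst_reroot_corollas:
  "wf_og X \<Longrightarrow> subst X (map (\<lambda>v. perm_corolla (front_perm (leaf_port X 0 v)) (length (X ! v))) [0..<length X])
     [0..<length X] = reroot X"
  unfolding reroot_def by (rule subst_perm_corollas[OF _ ports_perm_reroot])

lemma subst_unreroot_corollas:
  assumes wf: "wf_og X"
  shows "subst (reroot X) (map (\<lambda>v. perm_corolla (front_perm_inv (leaf_port X 0 v)) (length (X ! v))) [0..<length X])
     [0..<length X] = X"
proof -
  have "subst (reroot X) (map (\<lambda>v. perm_corolla (front_perm_inv (leaf_port X 0 v)) (length (reroot X ! v)))
      [0..<length (reroot X)]) [0..<length (reroot X)]
      = permute_ports (\<lambda>v. front_perm_inv (leaf_port X 0 v)) (\<lambda>v. front_perm (leaf_port X 0 v)) (reroot X)"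
    unfolding reroot_def
    by (rule subst_perm_corollas[OF wf_og_permute_ports[OF ports_perm_reroot wf] ports_perm_inverse[OF ports_perm_reroot]])
  also have "\<dots> = X" unfolding reroot_def by (rule permute_ports_inverse[OF ports_perm_reroot wf])
  finally show ?thesis by (simp add: map_perm_corolla_reroot)
qed

lemma reroot_iso_hom:
  assumes a: "cyc_tree a" "a \<noteq> []"
  shows "reroot_iso a \<in> Hom nucOp_op (reroot a) a" "reroot_iso_inv a \<in> Hom nucOp_op a (reroot a)"
proof -
  have \<rho>: "leaf_port a 0 v < length (a ! v)" if "v < length a" for v
    using leaf_port_lt[OF cyc_treeD(1)[OF a(1)] that cyc_treeD(3)[OF a(1)]] .
  have "subst_tree (reroot a) (map (\<lambda>v. perm_corolla (front_perm_inv (leaf_port a 0 v)) (length (reroot a ! v)))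
      [0..<length (reroot a)]) [0..<length (reroot a)]"
    using subst_tree_perm_corollas[OF cyc_tree_reroot[OF a(1)]] bij_betw_front_perm_inv[OF \<rho>] by simp
  then show "reroot_iso a \<in> Hom nucOp_op (reroot a) a"
    using valid_subst_iff[OF cyc_tree_reroot[OF a(1)]] subst_unreroot_corollas[OF cyc_treeD(2)[OF a(1)]]
    unfolding nucOp_op_def reroot_iso_def by (simp add: map_perm_corolla_reroot)
  have "subst_tree a (map (\<lambda>v. perm_corolla (front_perm (leaf_port a 0 v)) (length (a ! v))) [0..<length a]) [0..<length a]"
    using subst_tree_perm_corollas[OF a(1)] bij_betw_front_perm[OF \<rho>] by simp
  then show "reroot_iso_inv a \<in> Hom nucOp_op a (reroot a)"
    using valid_subst_iff[OF a(1)] subst_reroot_corollas[OF cyc_treeD(2)[OF a(1)]]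
    unfolding nucOp_op_def reroot_iso_inv_def by simp
qed

lemma reroot_iso_inverse:
  assumes a: "cyc_tree a"
  shows "op_comp (reroot_iso_inv a) (reroot_iso a) = op_ident (reroot a)"
    "op_comp (reroot_iso a) (reroot_iso_inv a) = op_ident a"
proof -
  let ?n = "length a"
  let ?E = "map (\<lambda>v. perm_corolla (front_perm_inv (leaf_port a 0 v)) (length (a ! v))) [0..<?n]"
  let ?E' = "map (\<lambda>v. perm_corolla (front_perm (leaf_port a 0 v)) (length (a ! v))) [0..<?n]"
  have \<rho>: "leaf_port a 0 v < length (a ! v)" if "v < ?n" for v
    using leaf_port_lt[OF cyc_treeD(1)[OF a] that cyc_treeD(3)[OF a]] .
  have "op_comp (a, ?E', [0..<?n], reroot a) (reroot a, ?E, [0..<length (reroot a)], a)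
      = (reroot a, map (\<lambda>v. relabel_leaves (front_perm_inv (leaf_port a 0 v)) (?E' ! v)) [0..<length (reroot a)],
         [0..<?n], reroot a)"
    by (rule op_comp_perm_corollas_right)
      (use \<rho> in \<open>auto simp: filter_eq_upt wf_og_perm_corolla bij_betw_front_perm\<close>)
  moreover have "map (\<lambda>v. relabel_leaves (front_perm_inv (leaf_port a 0 v)) (?E' ! v)) [0..<?n]
      = map (\<lambda>row. corolla (length row)) (reroot a)"
    by (rule nth_equalityI) (use \<rho> in \<open>simp_all add: relabel_perm_corolla front_perm_lt\<close>)
  ultimately show "op_comp (reroot_iso_inv a) (reroot_iso a) = op_ident (reroot a)"
    unfolding reroot_iso_def reroot_iso_inv_def op_ident_def by simp
  have "op_comp (reroot a, ?E, [0..<?n], a) (a, ?E', [0..<?n], reroot a)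
      = (a, map (\<lambda>v. relabel_leaves (front_perm (leaf_port a 0 v)) (?E ! v)) [0..<?n], [0..<?n], a)"
    by (rule op_comp_perm_corollas_right)
      (use \<rho> in \<open>auto simp: filter_eq_upt wf_og_perm_corolla bij_betw_front_perm_inv\<close>)
  moreover have "map (\<lambda>v. relabel_leaves (front_perm (leaf_port a 0 v)) (?E ! v)) [0..<?n]
      = map (\<lambda>row. corolla (length row)) a"
    by (rule nth_equalityI) (use \<rho> in \<open>simp_all add: relabel_perm_corolla front_perm_inv_lt\<close>)
  ultimately show "op_comp (reroot_iso a) (reroot_iso_inv a) = op_ident a"
    unfolding reroot_iso_def reroot_iso_inv_def op_ident_def by simp
qed

context subst_tree
begin

lemma subst_unreroot_inserts:
  assumes l: "l < length p"
  shows "subst (reroot_inserts p qs ! l)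
      (map (\<lambda>r. perm_corolla (front_perm_inv (leaf_port q 0 (pos \<sigma> l r))) (length (reroot_inserts p qs ! l ! r)))
        [0..<length (reroot_inserts p qs ! l)]) [0..<length (reroot_inserts p qs ! l)] = relabelled l"
proof -
  have "map (\<lambda>r. perm_corolla (front_perm_inv (leaf_port q 0 (pos \<sigma> l r))) (length (reroot (relabelled l) ! r)))
        [0..<length (relabelled l)]
      = map (\<lambda>r. perm_corolla (front_perm_inv (leaf_port (relabelled l) 0 r)) (length (relabelled l ! r)))
        [0..<length (relabelled l)]"
    by (rule map_cong) (use l pos_qs[OF l] leaf_port_subst_relabelled[OF pos_qs(1)[OF l]] in
        \<open>auto simp: relabelled_def\<close>)
  then show ?thesis unfolding reroot_inserts_nth[OF l] length_reroot
    by (simp only: subst_unreroot_corollas[OF relabelled_spec(3)[OF l]])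
qed

lemma op_comp_reroot_iso_reroot_mor:
  "op_comp (reroot_iso q) (reroot_mor (p, qs, \<sigma>, q)) = (reroot p, map relabelled [0..<length p], \<sigma>, q)"
proof -
  interpret rerooted: subst_tree "reroot p" "reroot_inserts p qs" \<sigma> by (rule subst_tree_reroot)
  let ?E = "map (\<lambda>v. perm_corolla (front_perm_inv (leaf_port q 0 v)) (length (q ! v))) [0..<length q]"
  have "?E ! x = perm_corolla (front_perm_inv (leaf_port q 0 x)) (length (rerooted.q ! x))"
    if "x < length \<sigma>" for x
    using that by (simp add: reroot_subst[symmetric])
  from rerooted.op_comp_perm_corollas_left[OF this, of q]
  show ?thesis unfolding reroot_iso_def reroot_mor_simp reroot_subst[symmetric]
    by (simp add: subst_unreroot_inserts)
qed

lemma op_comp_reroot_iso: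
  "op_comp (p, qs, \<sigma>, q) (reroot_iso p) = (reroot p, map relabelled [0..<length p], \<sigma>, q)"
proof -
  have "op_comp (p, qs, \<sigma>, q) (reroot p, map (\<lambda>v. perm_corolla (front_perm_inv (leaf_port p 0 v)) (length (p ! v)))
      [0..<length p], [0..<length (reroot p)], p)
    = (reroot p, map (\<lambda>l. relabel_leaves (front_perm_inv (leaf_port p 0 l)) (qs ! l)) [0..<length (reroot p)], \<sigma>, q)"
    by (rule op_comp_perm_corollas_right) (use set_assign wf_qs leaves_qs length_fiber_qs length_fiber in auto)
  then show ?thesis unfolding reroot_iso_def relabelled_def by simp
qed

lemma reroot_iso_natural:
  "op_comp (reroot_iso q) (reroot_mor (p, qs, \<sigma>, q)) = op_comp (p, qs, \<sigma>, q) (reroot_iso p)"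
  unfolding op_comp_reroot_iso_reroot_mor op_comp_reroot_iso ..

end

lemma Hom_nucOp_iff: "f \<in> Hom nucOp_op a b \<longleftrightarrow> (\<exists>qs \<sigma>. f = (a, qs, \<sigma>, b) \<and> valid_subst a qs \<sigma> b)"
  unfolding nucOp_op_def by auto

lemma Hom_nusOp_iff: "f \<in> Hom nusOp_op a b \<longleftrightarrow>
    (\<exists>qs \<sigma>. f = (a, qs, \<sigma>, b) \<and> valid_subst a qs \<sigma> b \<and> (\<forall>l < length a. rooted (qs ! l)))"
  unfolding nusOp_op_def by auto

lemma op_cat_simps [simp]:
  "Ob nucOp_op = {p. cyc_tree p \<and> p \<noteq> []}" "Ob nusOp_op = {p. rooted p \<and> p \<noteq> []}"
  "comp nucOp_op = op_comp" "comp nusOp_op = op_comp" "ident nucOp_op = op_ident" "ident nusOp_op = op_ident"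
  by (simp_all add: nucOp_op_def nusOp_op_def)

lemma op_comp_op_ident_op_ident: "cyc_tree a \<Longrightarrow> op_comp (op_ident a) (op_ident a) = op_ident a"
  using subst_tree.op_comp_op_ident_left[OF subst_tree_op_ident] subst_corollas[OF cyc_treeD(2)]
  unfolding corolla_eq_perm_corolla by (metis op_ident_eq)

lemma is_functor_inclusion: "is_functor nusOp_op nucOp_op id id"
  unfolding is_functor_def
proof (intro conjI ballI)
  fix a b f assume "f \<in> Hom nusOp_op a b"
  then show "id f \<in> Hom nucOp_op (id a) (id b)" unfolding Hom_nusOp_iff Hom_nucOp_iff by auto
qed (auto intro: rooted_imp_cyc_tree)

lemma is_functor_reroot: "is_functor nucOp_op nusOp_op reroot reroot_mor"
  unfolding is_functor_def
proof (intro conjI ballI)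
  fix a assume "a \<in> Ob nucOp_op"
  then show "reroot a \<in> Ob nusOp_op" using rooted_reroot cyc_tree_nonempty[OF cyc_tree_reroot] by simp
next
  fix a b f assume "a \<in> Ob nucOp_op" "f \<in> Hom nucOp_op a b"
  then obtain qs \<sigma> where f: "f = (a, qs, \<sigma>, b)" and sub: "subst_tree a qs \<sigma>" "subst a qs \<sigma> = b"
    unfolding Hom_nucOp_iff by (auto simp: valid_subst_iff)
  have "valid_subst (reroot a) (reroot_inserts a qs) \<sigma> (reroot b)"
    using subst_tree.subst_tree_reroot[OF sub(1)] subst_tree.reroot_subst[OF sub(1)] sub(2)
      valid_subst_iff[OF cyc_tree_reroot[OF subst_tree.cyc_tree_p[OF sub(1)]]] by simp
  then show "reroot_mor f \<in> Hom nusOp_op (reroot a) (reroot b)"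
    unfolding Hom_nusOp_iff f using subst_tree.rooted_reroot_inserts[OF sub(1)] by simp
next
  fix a assume "a \<in> Ob nucOp_op"
  then show "reroot_mor (ident nucOp_op a) = ident nusOp_op (reroot a)" by (simp add: reroot_mor_op_ident)
next
  fix a b c f g assume "a \<in> Ob nucOp_op" "f \<in> Hom nucOp_op a b" "g \<in> Hom nucOp_op b c" "b \<in> Ob nucOp_op"
  then obtain qs \<sigma> rs \<tau> where fg: "f = (a, qs, \<sigma>, b)" "g = (b, rs, \<tau>, c)"
    and sub: "subst_tree a qs \<sigma>" "subst a qs \<sigma> = b" "subst_tree b rs \<tau>"
    unfolding Hom_nucOp_iff by (auto simp: valid_subst_iff)
  show "reroot_mor (comp nucOp_op g f) = comp nusOp_op (reroot_mor g) (reroot_mor f)"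
    using subst_tree.reroot_mor_op_comp[OF sub(1), of rs \<tau> c] sub(2,3) fg by simp
qed

lemma nat_iso_unit: "nat_iso nusOp_op nusOp_op id id (reroot \<circ> id) (reroot_mor \<circ> id) op_ident"
  unfolding nat_iso_def
proof (intro conjI ballI)
  fix a assume "a \<in> Ob nusOp_op"
  then have a: "rooted a" "a \<noteq> []" by simp_all
  have "op_comp (op_ident a) (op_ident a) = op_ident a"
    by (rule op_comp_op_ident_op_ident[OF rooted_imp_cyc_tree[OF a(1)]])
  then show "is_iso nusOp_op (id a) ((reroot \<circ> id) a) (op_ident a)"
    unfolding is_iso_def using op_ident_hom_nusOp[OF a] reroot_rooted[OF a(1)] by auto
next
  fix a b f assume "a \<in> Ob nusOp_op" "b \<in> Ob nusOp_op" "f \<in> Hom nusOp_op a b"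
  then obtain qs \<sigma> where f: "f = (a, qs, \<sigma>, b)" and sub: "subst_tree a qs \<sigma>" "subst a qs \<sigma> = b"
    and rooted: "\<forall>l < length a. rooted (qs ! l)" "rooted a" "rooted b"
    unfolding Hom_nusOp_iff by (auto simp: valid_subst_iff rooted_imp_cyc_tree)
  have "reroot_mor f = f" using subst_tree.reroot_mor_rooted[OF sub(1)] rooted sub(2) f by simp
  then show "comp nusOp_op (op_ident b) (id f) = comp nusOp_op ((reroot_mor \<circ> id) f) (op_ident a)"
    using subst_tree.op_comp_op_ident_left[OF sub(1)] subst_tree.op_comp_op_ident_right[OF sub(1)] sub(2) f
    by simp
qed

lemma nat_iso_counit: "nat_iso nucOp_op nucOp_op (id \<circ> reroot) (id \<circ> reroot_mor) id id reroot_iso"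
  unfolding nat_iso_def
proof (intro conjI ballI)
  fix a assume "a \<in> Ob nucOp_op"
  then have a: "cyc_tree a" "a \<noteq> []" by simp_all
  show "is_iso nucOp_op ((id \<circ> reroot) a) (id a) (reroot_iso a)"
    unfolding is_iso_def using reroot_iso_hom[OF a] reroot_iso_inverse[OF a(1)] by auto
next
  fix a b f assume "a \<in> Ob nucOp_op" "f \<in> Hom nucOp_op a b"
  then obtain qs \<sigma> where f: "f = (a, qs, \<sigma>, b)" and sub: "subst_tree a qs \<sigma>" "subst a qs \<sigma> = b"
    unfolding Hom_nucOp_iff by (auto simp: valid_subst_iff)
  show "comp nucOp_op (reroot_iso b) ((id \<circ> reroot_mor) f) = comp nucOp_op (id f) (reroot_iso a)"
    using subst_tree.reroot_iso_natural[OF sub(1)] sub(2) f by simp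
qed

theorem proposition3p11:
  shows "cat_equivalence nusOp_op nucOp_op id id"
  unfolding cat_equivalence_def
  using is_functor_inclusion is_functor_reroot nat_iso_unit nat_iso_counit by blast

end
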